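(* Let $\tau$ lie in the complex upper half plane, $q=e^{2\pi i\tau}$, and let $\eta(\tau)=q^{1/24}\prod_{n\ge1}(1-q^n)$ be the Dedekind eta function. Define $$t(\tau)=\frac12\,\frac{\eta(\tau)^4\eta(4\tau)^2\eta(8\tau)^4}{\eta(2\tau)^{10}},\qquad f(\tau)=\frac{\eta(2\tau)^{10}}{\eta(\tau)^4\eta(4\tau)^4}.$$ Then in a neighbourhood of $\tau=i\infty$ we have $$\sum_{n\ge0}P_n\,t(\tau)^n=f(\tau),$$ where $(P_n)_{n\ge0}$ are the Catalan-Larcombe-French numbers.
   Context: The Catalan-Larcombe-French numbers are defined by $P_0=1$, $P_1=8$ and, for $n\ge 2$, $n^2P_n-8(3n^2-3n+1)P_{n-1}+128(n-1)^2P_{n-2}=0$. *)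

theory Defs
  imports "HOL-Analysis.Analysis"
begin

text \<open>Catalan-Larcombe-French numbers: P 0 = 1, P 1 = 8 and for m \<ge> 2,
  m^2 P m - 8 (3 m^2 - 3 m + 1) P (m-1) + 128 (m-1)^2 P (m-2) = 0,
  i.e. P m = (8 (3 m^2 - 3 m + 1) P (m-1) - 128 (m-1)^2 P (m-2)) / m^2.\<close>
fun clf :: "nat \<Rightarrow> real" where
  "clf 0 = 1"
| "clf (Suc 0) = 8"
| "clf (Suc (Suc n)) =
     (let m = real (n + 2) in
       (8 * (3 * m^2 - 3 * m + 1) * clf (Suc n) - 128 * (m - 1)^2 * clf n) / m^2)"

definition nome :: "complex \<Rightarrow> complex" where
  "nome \<tau> = exp (2 * pi * \<i> * \<tau>)"

definition dedekind_eta :: "complex \<Rightarrow> complex" where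
  "dedekind_eta \<tau> = exp (2 * pi * \<i> * \<tau> / 24) * prodinf (\<lambda>n. 1 - nome \<tau> ^ (n + 1))"

definition clf_t :: "complex \<Rightarrow> complex" where
  "clf_t \<tau> = (1/2) * (dedekind_eta \<tau> ^ 4 * dedekind_eta (4 * \<tau>) ^ 2 * dedekind_eta (8 * \<tau>) ^ 4)
                 / dedekind_eta (2 * \<tau>) ^ 10"

definition clf_f :: "complex \<Rightarrow> complex" where
  "clf_f \<tau> = dedekind_eta (2 * \<tau>) ^ 10 / (dedekind_eta \<tau> ^ 4 * dedekind_eta (4 * \<tau>) ^ 4)"

end

theory Submission
  imports Defs "HOL-Complex_Analysis.Complex_Analysis"
begin

text \<open>
  Write \<open>q\<close> for the nome, \<open>\<theta>\<^sub>3(q) = \<Sum>\<^sub>n q^(n^2)\<close> and \<open>\<theta>\<^sub>2(q) = q^(1/4) \<psi>(q)\<close>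
  (sums over \<open>n \<in> \<int>\<close>). Jacobi's triple product turns the eta quotients into theta functions:
  \<open>f = \<theta>\<^sub>3(q)^2\<close> and \<open>t = q \<psi>(q^2)^2 / (8 \<theta>\<^sub>3(q)^2)\<close>.

  Let \<open>G(x) = \<Sum>\<^sub>k binom(2k, k)^2 x^k = \<^sub>2F\<^sub>1(1/2, 1/2; 1; 16x)\<close>. Comparing differential
  equations, the generating function \<open>P\<close> of the Catalan-Larcombe-French numbers satisfies
  \<open>P(x) = G(2x - 16x^2)\<close> and \<open>(1 - 8x) P(x) = G(4x^2 / (1 - 8x)^2)\<close>. Together with the
  duplication formulas \<open>\<theta>\<^sub>3(q)^2 = \<theta>\<^sub>3(q^2)^2 + q \<psi>(q^2)^2\<close> and \<open>\<psi>(q)^2 = 2 \<theta>\<^sub>3(q^2) \<psi>(q^2)\<close>,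
  evaluating both identities at \<open>x = t\<close> shows that \<open>G(\<lambda>(q)/16) / \<theta>\<^sub>3(q)^2\<close>, where
  \<open>\<lambda> = \<theta>\<^sub>2^4 / \<theta>\<^sub>3^4\<close>, is invariant under \<open>q \<mapsto> q^2\<close> (Landen's transformation). Being
  continuous at \<open>q = 0\<close>, it is identically \<open>1\<close>: this is Jacobi's \<open>\<theta>\<^sub>3^2 = \<^sub>2F\<^sub>1(1/2, 1/2; 1; \<lambda>)\<close>.
  Hence \<open>P(t) = G(2t - 16t^2) = G(\<lambda>/16) = \<theta>\<^sub>3^2 = f\<close>.
\<close>

unbundle no vec_syntax

section \<open>Quadratic transformations of the generating function\<close>

lemma central_binomial_Suc: "Suc n * (2 * Suc n choose Suc n) = 2 * (2*n + 1) * (2*n choose n)"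
proof -
  define B0 where "B0 = (2*n choose n)"
  define B1 where "B1 = (Suc (2*n) choose n)"
  define B2 where "B2 = (2 * Suc n choose Suc n)"
  have B2_B1: "Suc (Suc (2*n)) * B1 = B2 * Suc n"
    using Suc_times_binomial_eq[of "Suc (2*n)" n] unfolding B1_def B2_def by simp
  have B1_B0: "Suc (2*n) * B0 = B1 * Suc n"
    using Suc_times_binomial_eq[of "2*n" n] binomial_symmetric[of "Suc n" "Suc (2*n)"]
    unfolding B0_def B1_def by simp
  have "Suc n * (Suc n * B2) = Suc n * (Suc (Suc (2*n)) * B1)"
    using B2_B1 by simp
  also have "\<dots> = 2 * (B1 * Suc n) * Suc n"
    by (simp only: mult_ac) simp
  also have "\<dots> = 2 * (Suc (2*n) * B0) * Suc n"
    using B1_B0 by simp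
  finally have "Suc n * (Suc n * B2) = Suc n * (2 * (2*n + 1) * B0)"
    by (simp add: mult_ac)
  then show ?thesis
    unfolding B0_def B2_def by (metis mult_left_cancel nat.simps(3))
qed

definition fps_theta :: "'a::comm_ring_1 fps \<Rightarrow> 'a fps" where
  "fps_theta F = fps_X * fps_deriv F"

lemma fps_theta_nth [simp]:
  fixes F :: "'a::comm_ring_1 fps"
  shows "fps_theta F $ n = of_nat n * F $ n"
  by (simp add: fps_theta_def fps_mult_fps_X_deriv_shift)

definition central_binom_sq_fps :: "complex fps" where
  "central_binom_sq_fps = Abs_fps (\<lambda>k. of_nat ((2*k choose k)^2))"

lemma central_binom_sq_fps_nth_0 [simp]: "central_binom_sq_fps $ 0 = 1"
  by (simp add: central_binom_sq_fps_def)

lemma central_binom_sq_fps_rec: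
  "of_nat ((Suc m)^2) * central_binom_sq_fps $ Suc m = 4 * of_nat ((2*m + 1)^2) * central_binom_sq_fps $ m"
proof -
  have "(Suc m)^2 * (2 * Suc m choose Suc m)^2 = 4 * (2*m + 1)^2 * (2*m choose m)^2"
    using arg_cong[OF central_binomial_Suc, of "\<lambda>k. k^2", of m]
    by (simp only: power_mult_distrib) simp
  then have "(of_nat ((Suc m)^2 * (2 * Suc m choose Suc m)^2) :: complex)
      = of_nat (4 * (2*m + 1)^2 * (2*m choose m)^2)"
    by (simp only:)
  then show ?thesis
    by (simp add: central_binom_sq_fps_def)
qed

lemma central_binom_sq_fps_ode:
  "fps_X * (1 - 16*fps_X) * fps_deriv (fps_deriv central_binom_sq_fps)
     + (1 - 32*fps_X) * fps_deriv central_binom_sq_fps - 4 * central_binom_sq_fps = 0"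
proof -
  let ?G = central_binom_sq_fps
  have theta_ode: "fps_theta (fps_theta ?G)
      - fps_X * (16 * fps_theta (fps_theta ?G) + 16 * fps_theta ?G + 4 * ?G) = 0"
  proof (rule fps_ext)
    fix n
    show "(fps_theta (fps_theta ?G)
        - fps_X * (16 * fps_theta (fps_theta ?G) + 16 * fps_theta ?G + 4 * ?G)) $ n = 0 $ n"
    proof (cases n)
      case (Suc m)
      then have "(fps_theta (fps_theta ?G)
          - fps_X * (16 * fps_theta (fps_theta ?G) + 16 * fps_theta ?G + 4 * ?G)) $ n
          = of_nat ((Suc m)^2) * ?G $ Suc m - 4 * of_nat ((2*m + 1)^2) * ?G $ m"
        by (simp del: of_nat_Suc) (simp add: algebra_simps power2_eq_square)
      then show ?thesis
        using central_binom_sq_fps_rec[of m] by simp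
    qed simp
  qed
  have "fps_X * (fps_X * (1 - 16*fps_X) * fps_deriv (fps_deriv ?G)
      + (1 - 32*fps_X) * fps_deriv ?G - 4 * ?G)
      = fps_theta (fps_theta ?G) - fps_X * (16 * fps_theta (fps_theta ?G) + 16 * fps_theta ?G + 4 * ?G)"
    unfolding fps_theta_def by (simp add: algebra_simps)
  with theta_ode show ?thesis
    by simp
qed

lemma central_binom_sq_fps_ode_compose:
  assumes "fps_nth p 0 = 0"
  shows "p * (1 - 16*p) * (fps_deriv (fps_deriv central_binom_sq_fps) oo p)
     + (1 - 32*p) * (fps_deriv central_binom_sq_fps oo p) - 4 * (central_binom_sq_fps oo p) = 0"
proof -
  have "(fps_X * (1 - 16*fps_X) * fps_deriv (fps_deriv central_binom_sq_fps)
      + (1 - 32*fps_X) * fps_deriv central_binom_sq_fps - 4 * central_binom_sq_fps) oo p = 0"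
    by (simp add: central_binom_sq_fps_ode)
  then show ?thesis
    using assms by (simp add: fps_compose_add_distrib fps_compose_sub_distrib fps_compose_mult_distrib)
qed

lemma fps_deriv2_compose:
  fixes A p :: "'a::idom fps"
  assumes "fps_nth p 0 = 0"
  shows "fps_deriv (fps_deriv (A oo p)) = (fps_deriv (fps_deriv A) oo p) * fps_deriv p * fps_deriv p
     + (fps_deriv A oo p) * fps_deriv (fps_deriv p)"
  using assms by (simp add: fps_compose_deriv algebra_simps)

definition clf_op :: "complex fps \<Rightarrow> complex fps" where
  "clf_op F = fps_theta (fps_theta F) - fps_X * (8 * (3 * fps_theta (fps_theta F) + 3 * fps_theta F + F))
     + fps_X^2 * (128 * (fps_theta (fps_theta F) + 2 * fps_theta F + F))"

lemma clf_op_eq_deriv: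
  "clf_op F = fps_X^2 * (1 - 8*fps_X) * (1 - 16*fps_X) * fps_deriv (fps_deriv F)
     + fps_X * (1 - 48*fps_X + 384*fps_X^2) * fps_deriv F + (128*fps_X^2 - 8*fps_X) * F"
  unfolding clf_op_def fps_theta_def by (simp add: algebra_simps power2_eq_square)

lemma clf_op_nth_1:
  fixes F :: "complex fps"
  shows "clf_op F $ 1 = F $ 1 - 8 * F $ 0"
  by (simp add: clf_op_def power2_eq_square)

lemma clf_op_nth_Suc_Suc:
  fixes F :: "complex fps"
  shows "clf_op F $ Suc (Suc n) = of_nat ((n+2)^2) * F $ Suc (Suc n)
     - 8 * (3 * of_nat ((n+2)^2) - 3 * of_nat (n+2) + 1) * F $ Suc n + 128 * of_nat ((n+1)^2) * F $ n"
proof -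
  have "(fps_X^2 * G) $ Suc (Suc n) = G $ n" for G :: "complex fps"
    by (simp add: power2_eq_square mult.assoc)
  then show ?thesis
    unfolding clf_op_def by (simp del: of_nat_Suc) (simp add: algebra_simps power2_eq_square)
qed

definition clf_fps :: "complex fps" where
  "clf_fps = Abs_fps (\<lambda>n. complex_of_real (clf n))"

lemma clf_Suc_Suc:
  "real ((n+2)^2) * clf (Suc (Suc n))
     = 8 * (3 * real ((n+2)^2) - 3 * real (n+2) + 1) * clf (Suc n) - 128 * real ((n+1)^2) * clf n"
  by (simp add: Let_def field_simps)

lemma clf_op_eq_0_imp_eq_clf_fps:
  fixes F :: "complex fps"
  assumes "clf_op F = 0" and "F $ 0 = 1"
  shows "F = clf_fps"
proof -
  have "F $ n = complex_of_real (clf n)" for n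
  proof (induction n rule: nat_less_induct)
    case (1 n)
    consider "n = 0" | "n = 1" | k where "n = Suc (Suc k)"
      by (metis One_nat_def not0_implies_Suc)
    then show ?case
    proof cases
      case 3
      have IH: "F $ Suc k = complex_of_real (clf (Suc k))" "F $ k = complex_of_real (clf k)"
        using "1" 3 by simp_all
      have "of_nat ((k+2)^2) * F $ Suc (Suc k) = 8 * (3 * of_nat ((k+2)^2) - 3 * of_nat (k+2) + 1) * F $ Suc k
          - 128 * of_nat ((k+1)^2) * F $ k"
        using assms(1) clf_op_nth_Suc_Suc[of F k] by (simp add: algebra_simps)
      also have "\<dots> = complex_of_real (real ((k+2)^2) * clf (Suc (Suc k)))"
        unfolding IH clf_Suc_Suc by simp
      finally have "of_nat ((k+2)^2) * F $ Suc (Suc k) = of_nat ((k+2)^2) * complex_of_real (clf (Suc (Suc k)))"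
        by simp
      moreover have "(of_nat ((k+2)^2) :: complex) \<noteq> 0"
        by (simp del: of_nat_power)
      ultimately show ?thesis
        using 3 by simp
    qed (use assms clf_op_nth_1[of F] in simp_all)
  qed
  then show ?thesis
    by (simp add: clf_fps_def fps_eq_iff)
qed

lemma clf_fps_eq_compose_quadratic:
  "clf_fps = central_binom_sq_fps oo (2*fps_X - 16*fps_X^2)"
proof -
  define p :: "complex fps" where "p = 2*fps_X - 16*fps_X^2"
  have p0: "fps_nth p 0 = 0"
    by (simp add: p_def)
  have dp: "fps_deriv p = 2 - 32*fps_X"
    by (simp add: p_def power2_eq_square algebra_simps)
  define a where "a = fps_deriv (fps_deriv central_binom_sq_fps) oo p"
  define b where "b = fps_deriv central_binom_sq_fps oo p"
  define c where "c = central_binom_sq_fps oo p"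
  have dc: "fps_deriv c = b * (2 - 32*fps_X)"
    unfolding b_def c_def using p0 dp by (simp add: fps_compose_deriv)
  have ddc: "fps_deriv (fps_deriv c) = a * (2 - 32*fps_X) * (2 - 32*fps_X) - 32 * b"
    unfolding a_def b_def c_def using fps_deriv2_compose[OF p0, of central_binom_sq_fps] dp by simp
  have "clf_op c = 2 * fps_X * (1 - 16*fps_X) * (p * (1 - 16*p) * a + (1 - 32*p) * b - 4 * c)"
    unfolding clf_op_eq_deriv ddc unfolding dc p_def by algebra
  also have "\<dots> = 0"
    unfolding a_def b_def c_def by (simp add: central_binom_sq_fps_ode_compose[OF p0])
  finally have "c = clf_fps"
    by (rule clf_op_eq_0_imp_eq_clf_fps) (simp add: c_def)
  then show ?thesis
    by (simp add: c_def p_def)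
qed

lemma clf_fps_eq_compose_rational:
  "clf_fps * (1 - 8*fps_X) = central_binom_sq_fps oo (4 * fps_X^2 * (inverse (1 - 8*fps_X))^2)"
proof -
  define V :: "complex fps" where "V = inverse (1 - 8*fps_X)"
  have V_inv: "V * (1 - 8*fps_X) = 1"
    unfolding V_def by (rule inverse_mult_eq_1) simp
  have dV: "fps_deriv V = 8 * V * V"
    unfolding V_def by (subst fps_inverse_deriv) (simp_all add: power2_eq_square)
  define p :: "complex fps" where "p = 4 * fps_X^2 * V^2"
  have p0: "fps_nth p 0 = 0"
    by (simp add: p_def)
  have dp: "fps_deriv p = 8 * fps_X * V * V + 64 * fps_X * fps_X * V * V * V"
    unfolding p_def by (simp add: power2_eq_square dV algebra_simps)
  have ddp: "fps_deriv (fps_deriv p)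
      = 8 * V * V + 256 * fps_X * V * V * V + 1536 * fps_X * fps_X * V * V * V * V"
    unfolding dp by (simp add: dV algebra_simps)
  define a where "a = fps_deriv (fps_deriv central_binom_sq_fps) oo p"
  define b where "b = fps_deriv central_binom_sq_fps oo p"
  define c where "c = central_binom_sq_fps oo p"
  have dc: "fps_deriv c = b * fps_deriv p"
    unfolding b_def c_def using p0 by (simp add: fps_compose_deriv)
  have db: "fps_deriv b = a * fps_deriv p"
    unfolding a_def b_def using p0 by (simp add: fps_compose_deriv)
  have ode: "p * (1 - 16*p) * a + (1 - 32*p) * b - 4 * c = 0"
    unfolding a_def b_def c_def by (rule central_binom_sq_fps_ode_compose[OF p0])
  define F where "F = c * V"
  have dF: "fps_deriv F = b * fps_deriv p * V + 8 * c * V * V"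
    unfolding F_def by (simp add: dc dV algebra_simps)
  have ddF: "fps_deriv (fps_deriv F) = (a * fps_deriv p * fps_deriv p + b * fps_deriv (fps_deriv p)) * V
      + 16 * b * fps_deriv p * V * V + 128 * c * V * V * V"
    unfolding dF by (simp add: dc db dV algebra_simps)
  have "clf_op F = 0"
    unfolding clf_op_eq_deriv ddF unfolding dF ddp unfolding dp F_def
    using ode V_inv unfolding p_def by algebra
  then have "F = clf_fps"
    by (rule clf_op_eq_0_imp_eq_clf_fps) (simp add: F_def c_def V_def)
  then have "clf_fps * (1 - 8*fps_X) = c * (V * (1 - 8*fps_X))"
    by (simp add: F_def mult.assoc)
  also have "\<dots> = c"
    by (simp add: V_inv)
  finally show ?thesis
    by (simp add: c_def p_def V_def)
qed

lemma central_binom_sq_fps_conv_radius_pos: "fps_conv_radius central_binom_sq_fps > 0"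
proof -
  have "norm (central_binom_sq_fps $ n * (1/32) ^ n) \<le> (1/2) ^ n" for n
  proof -
    have "real (2*n choose n) \<le> 4^n"
      using binomial_le_pow2[of "2*n" n] by (simp add: power_mult flip: of_nat_le_iff)
    then have "norm (central_binom_sq_fps $ n * (1/32) ^ n) \<le> (4^n)^2 * (1/32)^n"
      by (simp add: central_binom_sq_fps_def norm_mult norm_power power_mono)
    also have "\<dots> = (16 * (1/32)) ^ n"
    proof -
      have "((4::real)^n)^2 = (4^2)^n"
        by (metis power_mult mult.commute)
      then show ?thesis
        by (simp only: power_mult_distrib) simp
    qed
    finally show ?thesis
      by simp
  qed
  then have "summable (\<lambda>n. central_binom_sq_fps $ n * (1/32) ^ n)"
    by (intro summable_comparison_test[OF _ summable_geometric]) auto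
  then have "fps_conv_radius central_binom_sq_fps \<ge> norm (1/32 :: complex)"
    unfolding fps_conv_radius_def by (rule conv_radius_geI)
  then show ?thesis
    by (rule less_le_trans[rotated]) simp
qed

definition central_binom_sq :: "complex \<Rightarrow> complex" where
  "central_binom_sq = eval_fps central_binom_sq_fps"

lemma central_binom_sq_has_fps_expansion: "central_binom_sq has_fps_expansion central_binom_sq_fps"
  unfolding central_binom_sq_def by (rule eval_fps_has_fps_expansion[OF central_binom_sq_fps_conv_radius_pos])

lemma central_binom_sq_0 [simp]: "central_binom_sq 0 = 1"
  by (simp add: central_binom_sq_def eval_fps_at_0)

lemma isCont_central_binom_sq_0: "isCont central_binom_sq 0"
  unfolding central_binom_sq_def using central_binom_sq_fps_conv_radius_pos
  by (intro continuous_eval_fps) (simp add: zero_ereal_def)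

lemma clf_fps_has_fps_expansion_quadratic:
  "(\<lambda>x. central_binom_sq (2*x - 16*x^2)) has_fps_expansion clf_fps"
proof -
  have "(\<lambda>x::complex. 2*x - 16*x^2) has_fps_expansion (fps_const 2 * fps_X - fps_const 16 * fps_X^2)"
    by (intro has_fps_expansion_diff has_fps_expansion_cmult_left has_fps_expansion_fps_X
        has_fps_expansion_power)
  then have "(central_binom_sq \<circ> (\<lambda>x. 2*x - 16*x^2)) has_fps_expansion
      (central_binom_sq_fps oo (2*fps_X - 16*fps_X^2))"
    by (intro has_fps_expansion_compose[OF central_binom_sq_has_fps_expansion])
       (simp_all add: numeral_fps_const)
  then show ?thesis
    by (simp add: clf_fps_eq_compose_quadratic o_def)
qed

lemma clf_fps_has_fps_expansion_rational:
  "(\<lambda>x. central_binom_sq (4 * x^2 * (inverse (1 - 8*x))^2)) has_fps_expansion clf_fps * (1 - 8*fps_X)"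
proof -
  have "(\<lambda>x::complex. 4 * x^2 * (inverse (1 - 8*x))^2) has_fps_expansion
      (fps_const 4 * fps_X^2 * (inverse (1 - fps_const 8 * fps_X))^2)"
    by (intro has_fps_expansion_mult has_fps_expansion_cmult_left has_fps_expansion_fps_X
        has_fps_expansion_power has_fps_expansion_inverse has_fps_expansion_diff has_fps_expansion_1) simp
  then have "(central_binom_sq \<circ> (\<lambda>x. 4 * x^2 * (inverse (1 - 8*x))^2)) has_fps_expansion
      (central_binom_sq_fps oo (4 * fps_X^2 * (inverse (1 - 8*fps_X))^2))"
    by (intro has_fps_expansion_compose[OF central_binom_sq_has_fps_expansion])
       (simp_all add: numeral_fps_const)
  then show ?thesis
    by (simp add: clf_fps_eq_compose_rational o_def)
qed

lemma clf_fps_conv_radius_pos: "fps_conv_radius clf_fps > 0"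
  using clf_fps_has_fps_expansion_quadratic by (simp add: has_fps_expansion_def)

lemma eventually_clf_series_eq_central_binom_sq:
  "\<forall>\<^sub>F x in nhds 0. eval_fps clf_fps x = central_binom_sq (2*x - 16*x^2) \<and>
     eval_fps clf_fps x * (1 - 8*x) = central_binom_sq (4 * x^2 * (inverse (1 - 8*x))^2)"
proof -
  have "(\<lambda>x. eval_fps clf_fps x * (1 - 8*x)) has_fps_expansion clf_fps * (1 - 8*fps_X)"
    using clf_fps_conv_radius_pos
    by (intro has_fps_expansion_mult eval_fps_has_fps_expansion has_fps_expansion_diff
        has_fps_expansion_cmult_left has_fps_expansion_fps_X has_fps_expansion_1)
       (simp_all add: numeral_fps_const)
  then have "\<forall>\<^sub>F x in nhds 0. eval_fps (clf_fps * (1 - 8*fps_X)) x = eval_fps clf_fps x * (1 - 8*x)"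
    and "\<forall>\<^sub>F x in nhds 0. eval_fps clf_fps x = central_binom_sq (2*x - 16*x^2)"
    and "\<forall>\<^sub>F x in nhds 0. eval_fps (clf_fps * (1 - 8*fps_X)) x
      = central_binom_sq (4 * x^2 * (inverse (1 - 8*x))^2)"
    using clf_fps_has_fps_expansion_quadratic clf_fps_has_fps_expansion_rational
    by (simp_all add: has_fps_expansion_def)
  then show ?thesis
    by eventually_elim simp
qed

section \<open>Jacobi's triple product\<close>

fun qbinom :: "complex \<Rightarrow> nat \<Rightarrow> nat \<Rightarrow> complex" where
  "qbinom y 0 k = (if k = 0 then 1 else 0)"
| "qbinom y (Suc n) 0 = 1"
| "qbinom y (Suc n) (Suc k) = qbinom y n (Suc k) + y^(n-k) * qbinom y n k"

lemma qbinom_eq_0: "n < k \<Longrightarrow> qbinom y n k = 0"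
proof (induction n arbitrary: k)
  case (Suc n)
  then show ?case
    by (cases k) auto
qed simp

lemma qbinom_0_right [simp]: "qbinom y n 0 = 1"
  by (cases n) auto

lemma rothe_qbinomial:
  "(\<Prod>j<n. 1 + x^(2*j+1) * v) = (\<Sum>k\<le>n. qbinom (x^2) n k * x^(k^2) * v^k)"
proof (induction n)
  case (Suc n)
  define a where "a k = qbinom (x^2) n k * x^(k^2) * v^k" for k
  have shift: "(\<Sum>k\<le>n. a k) = 1 + (\<Sum>k\<le>n. qbinom (x^2) n (Suc k) * x^((Suc k)^2) * v^(Suc k))"
  proof -
    have "(\<Sum>k\<le>n. a k) = (\<Sum>k\<le>Suc n. a k)"
      by (simp add: a_def qbinom_eq_0)
    also have "\<dots> = a 0 + (\<Sum>k\<le>n. a (Suc k))"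
      by (rule sum.atMost_Suc_shift)
    finally show ?thesis
      by (simp add: a_def)
  qed
  have step: "a k * x^(2*n+1) * v = (x^2)^(n-k) * qbinom (x^2) n k * x^((Suc k)^2) * v^(Suc k)"
    if "k \<in> {..n}" for k
  proof -
    have "2*(n-k) + (Suc k)^2 = k^2 + (2*n+1)"
      using that by (simp add: power2_eq_square algebra_simps)
    then have "(x^2)^(n-k) * x^((Suc k)^2) = x^(k^2) * x^(2*n+1)"
      by (simp only: power_mult[symmetric] power_add[symmetric])
    then show ?thesis
      unfolding a_def by (simp add: algebra_simps)
  qed
  have "(\<Prod>j<Suc n. 1 + x^(2*j+1) * v) = (\<Sum>k\<le>n. a k) * (1 + x^(2*n+1) * v)"
    using Suc by (simp add: a_def)
  also have "\<dots> = (\<Sum>k\<le>n. a k) + (\<Sum>k\<le>n. a k * x^(2*n+1) * v)"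
    by (simp add: algebra_simps sum_distrib_left sum_distrib_right)
  also have "(\<Sum>k\<le>n. a k * x^(2*n+1) * v)
      = (\<Sum>k\<le>n. (x^2)^(n-k) * qbinom (x^2) n k * x^((Suc k)^2) * v^(Suc k))"
    by (rule sum.cong[OF refl step])
  also note shift
  also have "1 + (\<Sum>k\<le>n. qbinom (x^2) n (Suc k) * x^((Suc k)^2) * v^(Suc k))
      + (\<Sum>k\<le>n. (x^2)^(n-k) * qbinom (x^2) n k * x^((Suc k)^2) * v^(Suc k))
      = 1 + (\<Sum>k\<le>n. qbinom (x^2) (Suc n) (Suc k) * x^((Suc k)^2) * v^(Suc k))"
    by (simp add: algebra_simps sum.distrib[symmetric])
  also have "\<dots> = (\<Sum>k\<le>Suc n. qbinom (x^2) (Suc n) k * x^(k^2) * v^k)"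
    by (subst sum.atMost_Suc_shift) simp
  finally show ?case .
qed simp

definition qpoch :: "complex \<Rightarrow> nat \<Rightarrow> complex" where
  "qpoch y m = (\<Prod>i<m. 1 - y^(i+1))"

lemma qpoch_0 [simp]: "qpoch y 0 = 1"
  by (simp add: qpoch_def)

lemma qpoch_Suc: "qpoch y (Suc m) = qpoch y m * (1 - y^(Suc m))"
  by (simp add: qpoch_def)

lemma qbinom_mult_qpoch: "k \<le> n \<Longrightarrow> qbinom y n k * qpoch y k * qpoch y (n-k) = qpoch y n"
proof (induction n arbitrary: k)
  case (Suc n)
  show ?case
  proof (cases k)
    case (Suc k')
    show ?thesis
    proof (cases "k' = n")
      case True
      then have "qbinom y (Suc n) k * qpoch y k * qpoch y (Suc n - k)
          = (qbinom y n n * qpoch y n * qpoch y (n - n)) * (1 - y^(Suc n))"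
        using \<open>k = Suc k'\<close> by (simp add: qbinom_eq_0 qpoch_Suc)
      then show ?thesis
        using Suc.IH[of n] by (simp add: qpoch_Suc)
    next
      case False
      with Suc.prems \<open>k = Suc k'\<close> have "k' < n"
        by simp
      then have split: "qpoch y (n - k') = qpoch y (n - Suc k') * (1 - y^(n-k'))"
        and powers: "y^k' * y^(n-k') = y^n"
        using qpoch_Suc[of y "n - Suc k'"] by (simp_all add: Suc_diff_Suc flip: power_add)
      have "qbinom y (Suc n) k * qpoch y k * qpoch y (Suc n - k)
          = (qbinom y n (Suc k') * qpoch y (Suc k') * qpoch y (n - Suc k')) * (1 - y^(n-k'))
            + y^(n-k') * (1 - y^(Suc k')) * (qbinom y n k' * qpoch y k' * qpoch y (n - k'))"
        using \<open>k = Suc k'\<close> by (simp add: split qpoch_Suc[of y k'] algebra_simps)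
      also have "\<dots> = qpoch y n * (1 - y^(Suc n))"
        using Suc.IH[of "Suc k'"] Suc.IH[of k'] \<open>k' < n\<close> powers by (simp add: algebra_simps)
      finally show ?thesis
        by (simp add: qpoch_Suc)
    qed
  qed simp
qed simp

definition qpoch_inf :: "complex \<Rightarrow> complex" where
  "qpoch_inf y = prodinf (\<lambda>n. 1 - y^(n+1))"

lemma norm_power_Suc_less_one: "norm (y::complex) < 1 \<Longrightarrow> norm (y^Suc k) < 1"
  by (simp add: norm_power power_less_one_iff del: power_Suc)

lemma convergent_prod_qpoch:
  fixes y :: complex
  assumes "norm y < 1"
  shows "convergent_prod (\<lambda>n. 1 - y^(n+1))"
proof -
  have "summable (\<lambda>n. norm y * norm y ^ n)"
    using assms by (intro summable_mult summable_geometric) simp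
  then have "summable (\<lambda>n. norm ((1 - y^(n+1)) - 1))"
    by (simp add: norm_mult norm_power)
  then show ?thesis
    by (intro abs_convergent_prod_imp_convergent_prod summable_imp_abs_convergent_prod)
qed

lemma qpoch_tendsto_qpoch_inf:
  assumes "norm y < 1"
  shows "qpoch y \<longlonglongrightarrow> qpoch_inf y"
proof -
  have "(\<lambda>n. qpoch y (Suc n)) \<longlonglongrightarrow> qpoch_inf y"
    using convergent_prod_LIMSEQ[OF convergent_prod_qpoch[OF assms]]
    by (simp add: qpoch_def qpoch_inf_def lessThan_Suc_atMost)
  then show ?thesis
    by (rule LIMSEQ_imp_Suc)
qed

lemma qpoch_inf_nonzero:
  assumes "norm y < 1"
  shows "qpoch_inf y \<noteq> 0"
  unfolding qpoch_inf_def
proof (rule prodinf_nonzero[OF convergent_prod_qpoch[OF assms]])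
  show "1 - y^(i+1) \<noteq> 0" for i
    using norm_power_Suc_less_one[OF assms, of i] by auto
qed

lemma qpoch_nonzero:
  assumes "norm y < 1"
  shows "qpoch y m \<noteq> 0"
proof -
  have "1 - y^(i+1) \<noteq> 0" for i
    using norm_power_Suc_less_one[OF assms, of i] by auto
  then show ?thesis
    by (simp add: qpoch_def)
qed

lemma qbinom_eq_qpoch:
  assumes "norm y < 1" "k \<le> n"
  shows "qbinom y n k = qpoch y n / (qpoch y k * qpoch y (n-k))"
  using qbinom_mult_qpoch[OF assms(2), of y] qpoch_nonzero[OF assms(1)] by (simp add: field_simps)

lemma qbinom_bounded:
  assumes "norm y < 1"
  obtains M where "\<And>n k. norm (qbinom y n k) \<le> M"
proof -
  have "convergent (qpoch y)" "convergent (\<lambda>m. inverse (qpoch y m))"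
    using qpoch_tendsto_qpoch_inf[OF assms] tendsto_inverse[OF _ qpoch_inf_nonzero[OF assms]]
    by (auto simp: convergent_def)
  then obtain K1 K2 where K: "K1 > 0" "K2 > 0"
    "\<And>m. norm (qpoch y m) \<le> K1" "\<And>m. norm (inverse (qpoch y m)) \<le> K2"
    by (auto dest!: convergent_imp_Bseq simp: Bseq_def)
  have "norm (qbinom y n k) \<le> K1 * K2 * K2" for n k
  proof (cases "k \<le> n")
    case True
    then have "norm (qbinom y n k)
        = norm (qpoch y n) * norm (inverse (qpoch y k)) * norm (inverse (qpoch y (n-k)))"
      by (simp add: qbinom_eq_qpoch[OF assms] norm_mult norm_divide divide_inverse)
    also have "\<dots> \<le> K1 * K2 * K2"
      using K by (intro mult_mono) auto
    finally show ?thesis .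
  qed (use K qbinom_eq_0[of n k y] in simp)
  then show ?thesis
    using that by blast
qed

lemma qbinom_symmetric:
  assumes "norm y < 1" "k \<le> n"
  shows "qbinom y n (n - k) = qbinom y n k"
  using assms by (simp add: qbinom_eq_qpoch mult.commute)

lemma qbinom_central_tendsto_upper:
  assumes "norm y < 1"
  shows "(\<lambda>N. qbinom y (2*N) (N + j)) \<longlonglongrightarrow> inverse (qpoch_inf y)"
proof -
  note lim = filterlim_compose[OF qpoch_tendsto_qpoch_inf[OF assms]]
  have "(\<lambda>N. qpoch y (2*N) / (qpoch y (N + j) * qpoch y (N - j)))
      \<longlonglongrightarrow> qpoch_inf y / (qpoch_inf y * qpoch_inf y)"
    using qpoch_inf_nonzero[OF assms]
    by (intro tendsto_intros lim mult_nat_left_at_top filterlim_add_const_nat_at_top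
        filterlim_minus_const_nat_at_top) auto
  moreover have "\<forall>\<^sub>F N in sequentially. qpoch y (2*N) / (qpoch y (N + j) * qpoch y (N - j))
      = qbinom y (2*N) (N + j)"
    using eventually_ge_at_top[of j] by eventually_elim (simp add: qbinom_eq_qpoch[OF assms])
  ultimately show ?thesis
    using qpoch_inf_nonzero[OF assms] by (simp add: Lim_transform_eventually field_simps)
qed

lemma qbinom_central_tendsto_lower:
  assumes "norm y < 1"
  shows "(\<lambda>N. qbinom y (2*N) (N - Suc j)) \<longlonglongrightarrow> inverse (qpoch_inf y)"
proof -
  have symmetric: "qbinom y (2*N) (N + Suc j) = qbinom y (2*N) (N - Suc j)" if "N \<ge> Suc j" for N
  proof -
    have "2*N - (N + Suc j) = N - Suc j"
      using that by simp
    then show ?thesis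
      using qbinom_symmetric[OF assms, of "N + Suc j" "2*N"] that by simp
  qed
  have "\<forall>\<^sub>F N in sequentially. qbinom y (2*N) (N + Suc j) = qbinom y (2*N) (N - Suc j)"
    using eventually_ge_at_top[of "Suc j"] by eventually_elim (rule symmetric)
  with qbinom_central_tendsto_upper[OF assms, of "Suc j"] show ?thesis
    by (rule Lim_transform_eventually)
qed

lemma prod_lessThan_add:
  fixes m n :: nat
  shows "(\<Prod>j<m + n. g j) = (\<Prod>j<m. g j) * (\<Prod>i<n. g (m + i))"
  by (induction n) (simp_all add: mult.assoc)

lemma sum_lessThan_add:
  fixes m n :: nat
  shows "(\<Sum>j<m + n. g j) = (\<Sum>j<m. g j) + (\<Sum>i<n. g (m + i))"
  by (induction n) (simp_all add: add.assoc)

lemma power_square_exponent_shift: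
  fixes x z :: complex
  assumes "x \<noteq> 0" "z \<noteq> 0"
  shows "x^(k^2) * (z / x^(2*N))^k
    = z^N / x^(N^2) * (x powi ((int k - int N)^2) * z powi (int k - int N))"
proof -
  have "(int k - int N)^2 = int (k^2) + int (N^2) - int (2*N*k)"
    by (simp add: power2_eq_square algebra_simps)
  then have "x powi ((int k - int N)^2) = x^(k^2) * x^(N^2) / x^(2*N*k)"
    using assms by (simp add: power_int_diff power_int_add del: of_nat_power of_nat_mult)
  moreover have "z powi (int k - int N) = z^k / z^N"
    using assms by (simp add: power_int_diff)
  moreover have "(z / x^(2*N))^k = z^k / x^(2*N*k)"
    by (simp add: power_divide power_mult)
  ultimately show ?thesis
    using assms by (simp add: field_simps)
qed

lemma prod_odd_powers_reflect:
  fixes x z :: complex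
  assumes "x \<noteq> 0" "z \<noteq> 0"
  shows "(\<Prod>j<2*N. 1 + x^(2*j+1) * (z / x^(2*N)))
    = z^N / x^(N^2) * (\<Prod>i<N. (1 + x^(2*i+1) * z) * (1 + x^(2*i+1) / z))"
proof -
  define v where "v = z / x^(2*N)"
  have upper: "1 + x^(2*(N+i)+1) * v = 1 + x^(2*i+1) * z" for i
    using assms by (simp add: v_def power_add field_simps)
  have lower: "1 + x^(2*(N - Suc i)+1) * v = z / x^(2*i+1) * (1 + x^(2*i+1) / z)" if "i < N" for i
  proof -
    have "2*(N - Suc i)+1 + (2*i+1) = 2*N"
      using that by simp
    then have "x^(2*(N - Suc i)+1) * x^(2*i+1) = x^(2*N)"
      by (metis power_add)
    then show ?thesis
      using assms by (simp add: v_def field_simps)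
  qed
  have odd_prod: "(\<Prod>i<N. z / x^(2*i+1)) = z^N / x^(N^2)"
  proof (induction N)
    case (Suc N)
    have "(Suc N)^2 = N^2 + (2*N+1)"
      by (simp add: power2_eq_square)
    with Suc show ?case
      by (simp add: power_add mult_ac)
  qed simp
  have "(\<Prod>j<2*N. 1 + x^(2*j+1) * v)
      = (\<Prod>j<N. 1 + x^(2*j+1) * v) * (\<Prod>i<N. 1 + x^(2*i+1) * z)"
    by (simp only: mult_2[of N] prod_lessThan_add upper)
  also have "(\<Prod>j<N. 1 + x^(2*j+1) * v) = (\<Prod>i<N. 1 + x^(2*(N - Suc i)+1) * v)"
    by (rule prod.nat_diff_reindex[symmetric])
  also have "\<dots> = (\<Prod>i<N. z / x^(2*i+1) * (1 + x^(2*i+1) / z))"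
    by (intro prod.cong refl lower) simp
  also have "\<dots> = (\<Prod>i<N. z / x^(2*i+1)) * (\<Prod>i<N. 1 + x^(2*i+1) / z)"
    by (rule prod.distrib)
  finally show ?thesis
    unfolding odd_prod v_def prod.distrib by (simp only: mult_ac)
qed

lemma jacobi_triple_product_finite:
  fixes x z :: complex
  assumes "x \<noteq> 0" "z \<noteq> 0"
  shows "(\<Prod>i<N. (1 + x^(2*i+1) * z) * (1 + x^(2*i+1) / z)) =
     (\<Sum>j\<le>N. qbinom (x^2) (2*N) (N+j) * x^(j^2) * z^j) +
     (\<Sum>j<N. qbinom (x^2) (2*N) (N - Suc j) * x^((Suc j)^2) / z^(Suc j))"
proof -
  define C where "C = z^N / x^(N^2)"
  define f where "f k = qbinom (x^2) (2*N) k * (x powi ((int k - int N)^2) * z powi (int k - int N))" for k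
  have upper: "f (N+j) = qbinom (x^2) (2*N) (N+j) * x^(j^2) * z^j" for j
    by (simp add: f_def flip: of_nat_power)
  have lower: "f (N - Suc j) = qbinom (x^2) (2*N) (N - Suc j) * x^((Suc j)^2) / z^(Suc j)"
    if "j < N" for j
  proof -
    have exponent: "int (N - Suc j) - int N = - int (Suc j)"
      using that by simp
    then have "(int (N - Suc j) - int N)^2 = int ((Suc j)^2)"
      by (simp only: power2_minus of_nat_power)
    with exponent show ?thesis
      unfolding f_def by (simp add: power_int_minus divide_inverse del: of_nat_Suc flip: of_nat_power)
  qed
  have "C * (\<Prod>i<N. (1 + x^(2*i+1) * z) * (1 + x^(2*i+1) / z))
      = (\<Prod>j<2*N. 1 + x^(2*j+1) * (z / x^(2*N)))"
    unfolding C_def using assms by (rule prod_odd_powers_reflect[symmetric])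
  also have "\<dots> = (\<Sum>k\<le>2*N. qbinom (x^2) (2*N) k * x^(k^2) * (z / x^(2*N))^k)"
    by (rule rothe_qbinomial)
  also have "\<dots> = C * (\<Sum>k\<le>2*N. f k)"
    unfolding C_def f_def sum_distrib_left
    by (intro sum.cong refl)
      (simp only: mult.assoc power_square_exponent_shift[OF assms] mult.left_commute)
  also have "(\<Sum>k\<le>2*N. f k) = (\<Sum>k<N. f k) + (\<Sum>j<Suc N. f (N+j))"
    by (simp flip: sum_lessThan_add lessThan_Suc_atMost add: mult_2)
  also have "(\<Sum>k<N. f k) = (\<Sum>j<N. f (N - Suc j))"
    by (rule sum.nat_diff_reindex[symmetric])
  also have "\<dots> = (\<Sum>j<N. qbinom (x^2) (2*N) (N - Suc j) * x^((Suc j)^2) / z^(Suc j))"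
    by (intro sum.cong refl lower) simp
  also have "(\<Sum>j<Suc N. f (N+j)) = (\<Sum>j\<le>N. qbinom (x^2) (2*N) (N+j) * x^(j^2) * z^j)"
    by (simp only: lessThan_Suc_atMost upper)
  finally show ?thesis
    using assms by (simp add: C_def add.commute)
qed

lemma summable_power_sq_mult_power:
  fixes r s :: real
  assumes "0 \<le> r" "r < 1" "0 \<le> s"
  shows "summable (\<lambda>j. r^(j^2) * s^j)"
proof (rule summable_comparison_test[OF _ summable_geometric[of "1/2 :: real"]])
  have "(\<lambda>j. r^j * s) \<longlonglongrightarrow> 0 * s"
    using assms by (intro tendsto_mult LIMSEQ_power_zero tendsto_const) auto
  then have "\<forall>\<^sub>F j in sequentially. r^j * s < 1/2"
    by (intro order_tendstoD) auto
  then obtain N where N: "\<And>j. N \<le> j \<Longrightarrow> r^j * s < 1/2"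
    unfolding eventually_sequentially by blast
  show "\<exists>N. \<forall>n\<ge>N. norm (r^(n^2) * s^n) \<le> (1/2)^n"
  proof (intro exI allI impI)
    fix n assume "N \<le> n"
    then have "r^n * s \<le> 1/2"
      using N by (simp add: less_imp_le)
    then have "(r^n * s)^n \<le> (1/2)^n"
      using assms by (intro power_mono) auto
    then show "norm (r^(n^2) * s^n) \<le> (1/2)^n"
      using assms by (simp add: power2_eq_square power_mult power_mult_distrib)
  qed
qed simp

lemma tannery_partial_sums:
  fixes c :: "nat \<Rightarrow> nat \<Rightarrow> complex" and w :: "nat \<Rightarrow> complex"
  assumes lim: "\<And>j. (\<lambda>N. c N j) \<longlonglongrightarrow> L"
    and bound: "\<And>N j. norm (c N j) \<le> M"
    and summable: "summable (\<lambda>j. norm (w j))"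
    and length: "\<And>N. d N \<ge> N"
  shows "(\<lambda>N. \<Sum>j<d N. c N j * w j) \<longlonglongrightarrow> L * (\<Sum>j. w j)"
proof -
  define a where "a j N = (if j < d N then c N j * w j else 0)" for j N
  have termwise: "(\<lambda>N. a j N) \<longlonglongrightarrow> L * w j" for j
  proof -
    have "\<forall>\<^sub>F N in sequentially. c N j * w j = a j N"
      using eventually_gt_at_top[of j] by eventually_elim (use length in \<open>auto simp: a_def intro: less_le_trans\<close>)
    then show ?thesis
      by (rule Lim_transform_eventually[OF tendsto_mult[OF lim tendsto_const]])
  qed
  have dominated: "\<forall>\<^sub>F (j, N) in at_top \<times>\<^sub>F sequentially. norm (a j N) \<le> M * norm (w j)"
  proof (intro always_eventually allI)
    have "M \<ge> 0"
      using bound[of 0 0] norm_ge_zero[of "c 0 0"] by linarith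
    then show "case p of (j, N) \<Rightarrow> norm (a j N) \<le> M * norm (w j)" for p
      using bound by (cases p) (auto simp: a_def norm_mult intro: mult_right_mono)
  qed
  have majorant: "summable (\<lambda>j. M * norm (w j))"
    by (intro summable_mult summable)
  have "(\<lambda>N. \<Sum>j. a j N) \<longlonglongrightarrow> (\<Sum>j. L * w j)"
    using tannerys_theorem[OF termwise dominated majorant trivial_limit_sequentially] by (elim conjE)
  moreover have "(\<Sum>j. a j N) = (\<Sum>j<d N. c N j * w j)" for N
    by (subst suminf_finite[of "{..<d N}"]) (simp_all add: a_def)
  ultimately show ?thesis
    by (simp add: suminf_mult[OF summable_norm_cancel[OF summable]])
qed

lemma jacobi_triple_product:
  fixes x z :: complex
  assumes "norm x < 1" "x \<noteq> 0" "z \<noteq> 0"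
  shows "(\<lambda>N. \<Prod>i<N. (1 + x^(2*i+1) * z) * (1 + x^(2*i+1) / z)) \<longlonglongrightarrow>
     inverse (qpoch_inf (x^2)) * ((\<Sum>j. x^(j^2) * z^j) + (\<Sum>j. x^((Suc j)^2) / z^(Suc j)))"
proof -
  have y: "norm (x^2) < 1"
    using assms(1) by (simp add: norm_power power_less_one_iff)
  obtain M where M: "\<And>n k. norm (qbinom (x^2) n k) \<le> M"
    using qbinom_bounded[OF y] by blast
  have "summable (\<lambda>j. norm (x^(j^2) * z^j))"
    using summable_power_sq_mult_power[of "norm x" "norm z"] assms by (simp add: norm_mult norm_power)
  then have pos: "(\<lambda>N. \<Sum>j<Suc N. qbinom (x^2) (2*N) (N+j) * (x^(j^2) * z^j))
      \<longlonglongrightarrow> inverse (qpoch_inf (x^2)) * (\<Sum>j. x^(j^2) * z^j)"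
    by (rule tannery_partial_sums[OF qbinom_central_tendsto_upper[OF y] M]) simp
  have "summable (\<lambda>j. norm x^(j^2) * (inverse (norm z))^j)"
    using summable_power_sq_mult_power[of "norm x" "inverse (norm z)"] assms by simp
  then have "summable (\<lambda>j. norm (x^((Suc j)^2) / z^(Suc j)))"
    by (subst (asm) summable_Suc_iff[symmetric]) (simp add: norm_mult norm_power norm_divide field_simps)
  then have neg: "(\<lambda>N. \<Sum>j<N. qbinom (x^2) (2*N) (N - Suc j) * (x^((Suc j)^2) / z^(Suc j)))
      \<longlonglongrightarrow> inverse (qpoch_inf (x^2)) * (\<Sum>j. x^((Suc j)^2) / z^(Suc j))"
    by (rule tannery_partial_sums[OF qbinom_central_tendsto_lower[OF y] M]) simp
  moreover have "(\<Prod>i<N. (1 + x^(2*i+1) * z) * (1 + x^(2*i+1) / z))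
      = (\<Sum>j<Suc N. qbinom (x^2) (2*N) (N+j) * (x^(j^2) * z^j))
        + (\<Sum>j<N. qbinom (x^2) (2*N) (N - Suc j) * (x^((Suc j)^2) / z^(Suc j)))" for N
    unfolding jacobi_triple_product_finite[OF assms(2,3)] lessThan_Suc_atMost by (simp add: mult.assoc)
  ultimately show ?thesis
    using tendsto_add[OF pos neg] by (simp add: distrib_left)
qed

section \<open>Theta functions\<close>

definition theta3 :: "complex \<Rightarrow> complex" where
  "theta3 x = (\<Sum>j. x^(j^2)) + (\<Sum>j. x^((Suc j)^2))"

text \<open>The \<open>\<psi>\<close> of the header: \<open>\<theta>\<^sub>2(q) = q^(1/4) \<psi>(q)\<close>. Dropping the factor \<open>q^(1/4)\<close> keeps
  everything a power series in \<open>q\<close>.\<close>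
definition theta2_reduced :: "complex \<Rightarrow> complex" where
  "theta2_reduced x = 2 * (\<Sum>j. x^(j^2 + j))"

definition qpoch_odd :: "complex \<Rightarrow> nat \<Rightarrow> complex" where
  "qpoch_odd x N = (\<Prod>i<N. 1 - x^(2*i+1))"

lemma qpoch_double:
  fixes x :: complex
  shows "qpoch x (2*N) = qpoch (x^2) N * qpoch_odd x N"
proof (induction N)
  case (Suc N)
  have "2 * Suc N = Suc (Suc (2*N))"
    by simp
  then have "x^(Suc (Suc (2*N))) = (x^2)^(Suc N)"
    by (metis power_mult)
  moreover have "qpoch x (2 * Suc N) = qpoch x (2*N) * (1 - x^(Suc (2*N))) * (1 - x^(Suc (Suc (2*N))))"
    unfolding \<open>2 * Suc N = Suc (Suc (2*N))\<close> qpoch_Suc by simp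
  ultimately have "qpoch x (2 * Suc N)
      = (qpoch (x^2) N * (1 - (x^2)^(Suc N))) * (qpoch_odd x N * (1 - x^(2*N+1)))"
    unfolding Suc.IH by (simp add: mult_ac)
  then show ?case
    by (simp add: qpoch_Suc qpoch_odd_def)
qed (simp add: qpoch_odd_def)

lemma prod_one_plus_odd_powers:
  fixes x :: complex
  shows "(\<Prod>i<N. 1 + x^(2*i+1)) * qpoch_odd x N = qpoch_odd (x^2) N"
proof -
  have "(1 + x^(2*i+1)) * (1 - x^(2*i+1)) = 1 - (x^2)^(2*i+1)" for i
  proof -
    have "(x^2)^(2*i+1) = x^(2*i+1) * x^(2*i+1)"
      by (simp only: power_mult[symmetric] power_add[symmetric]) (simp add: algebra_simps)
    then show ?thesis
      by (simp add: algebra_simps)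
  qed
  then show ?thesis
    by (simp add: qpoch_odd_def prod.distrib[symmetric])
qed

lemma prod_one_plus_even_powers:
  fixes x :: complex
  shows "(\<Prod>i<N. 1 + x^(2*i+2)) * qpoch (x^2) N = qpoch (x^4) N"
proof -
  have "(1 + x^(2*i+2)) * (1 - (x^2)^(i+1)) = 1 - (x^4)^(i+1)" for i
  proof -
    have "(x^2)^(i+1) = x^(2*i+2)"
      by (simp only: power_mult[symmetric]) (simp add: algebra_simps)
    moreover have "(x^4)^(i+1) = x^(2*i+2) * x^(2*i+2)"
    proof -
      have "(x^4)^(i+1) = x^(4*(i+1))"
        by (rule power_mult[symmetric])
      also have "4*(i+1) = (2*i+2) + (2*i+2)"
        by simp
      finally show ?thesis
        by (simp only: power_add)
    qed
    ultimately show ?thesis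
      by (simp add: algebra_simps)
  qed
  then show ?thesis
    by (simp add: qpoch_def prod.distrib[symmetric])
qed

lemma prod_one_plus_even_powers_shift:
  fixes x :: complex
  shows "(\<Prod>i<N. 1 + x^(2*i)) * (1 + x^(2*N)) = 2 * (\<Prod>i<N. 1 + x^(2*i+2))"
proof (induction N)
  case (Suc N)
  have "(\<Prod>i<Suc N. 1 + x^(2*i)) * (1 + x^(2 * Suc N))
      = ((\<Prod>i<N. 1 + x^(2*i)) * (1 + x^(2*N))) * (1 + x^(2*N+2))"
    by (simp only: prod.lessThan_Suc) (simp add: mult_ac)
  also have "\<dots> = 2 * (\<Prod>i<Suc N. 1 + x^(2*i+2))"
    unfolding Suc by (simp only: prod.lessThan_Suc mult.assoc)
  finally show ?case .
qed simp

lemma theta3_0 [simp]: "theta3 0 = 1"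
proof -
  have "(\<Sum>j. (0::complex)^(j^2)) = (\<Sum>j\<in>{0}. (0::complex)^(j^2))"
    by (rule suminf_finite) auto
  then show ?thesis
    by (simp add: theta3_def power_0_left)
qed

lemma theta2_reduced_0 [simp]: "theta2_reduced 0 = 2"
proof -
  have "(\<Sum>j. (0::complex)^(j^2 + j)) = (\<Sum>j\<in>{0}. (0::complex)^(j^2 + j))"
    by (rule suminf_finite) auto
  then show ?thesis
    by (simp add: theta2_reduced_def)
qed

lemma norm_power2_less_one: "norm (x::complex) < 1 \<Longrightarrow> norm (x^2) < 1"
  and norm_power4_less_one: "norm (x::complex) < 1 \<Longrightarrow> norm (x^4) < 1"
  using norm_power_Suc_less_one[of x 1] norm_power_Suc_less_one[of x 3]
  by (simp_all add: numeral_2_eq_2 numeral_Bit0 numeral_3_eq_3)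

lemma theta3_product:
  fixes x :: complex
  assumes "norm x < 1"
  shows "theta3 x * qpoch_inf x ^ 2 * qpoch_inf (x^4) ^ 2 = qpoch_inf (x^2) ^ 5"
proof (cases "x = 0")
  case False
  define A where "A N = (\<Prod>i<N. 1 + x^(2*i+1))" for N
  define A2 where "A2 = (\<lambda>N. A N * A N)"
  have "A2 \<longlonglongrightarrow> inverse (qpoch_inf (x^2)) * theta3 x"
    using jacobi_triple_product[OF assms False, of 1] by (simp add: A2_def A_def prod.distrib theta3_def)
  moreover have "(\<lambda>N. qpoch x (2*N)) \<longlonglongrightarrow> qpoch_inf x"
    by (rule filterlim_compose[OF qpoch_tendsto_qpoch_inf[OF assms] mult_nat_left_at_top]) simp
  ultimately have "(\<lambda>N. A2 N * qpoch x (2*N)^2 * qpoch (x^4) N^2)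
      \<longlonglongrightarrow> inverse (qpoch_inf (x^2)) * theta3 x * qpoch_inf x ^ 2 * qpoch_inf (x^4) ^ 2"
    by (intro tendsto_mult tendsto_power qpoch_tendsto_qpoch_inf norm_power4_less_one assms)
  moreover have "A2 N * qpoch x (2*N)^2 * qpoch (x^4) N^2 = qpoch (x^2) (2*N)^2 * qpoch (x^2) N^2" for N
  proof -
    have "qpoch (x^2) (2*N) = qpoch (x^4) N * qpoch_odd (x^2) N"
      using qpoch_double[of "x^2" N] by (simp flip: power_mult)
    then show ?thesis
      unfolding qpoch_double[of x N] prod_one_plus_odd_powers[of x N, symmetric]
      by (simp add: A2_def A_def power2_eq_square mult_ac)
  qed
  moreover have "(\<lambda>N. qpoch (x^2) (2*N)^2 * qpoch (x^2) N^2) \<longlonglongrightarrow> qpoch_inf (x^2) ^ 2 * qpoch_inf (x^2) ^ 2"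
    by (intro tendsto_mult tendsto_power qpoch_tendsto_qpoch_inf norm_power2_less_one assms
        filterlim_compose[OF qpoch_tendsto_qpoch_inf mult_nat_left_at_top]) simp
  ultimately have "inverse (qpoch_inf (x^2)) * theta3 x * qpoch_inf x ^ 2 * qpoch_inf (x^4) ^ 2
      = qpoch_inf (x^2) ^ 2 * qpoch_inf (x^2) ^ 2"
    using LIMSEQ_unique by auto
  then show ?thesis
    using qpoch_inf_nonzero[OF norm_power2_less_one[OF assms]]
    by (simp add: field_simps eval_nat_numeral)
qed (simp add: qpoch_inf_def)

lemma theta2_reduced_eq_jacobi_series:
  fixes x :: complex
  assumes "x \<noteq> 0"
  shows "(\<Sum>j. x^(j^2) * x^j) + (\<Sum>j. x^((Suc j)^2) / x^(Suc j)) = theta2_reduced x"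
proof -
  have "(Suc j)^2 = (j^2 + j) + Suc j" for j
    by (simp add: power2_eq_square)
  then have "x^((Suc j)^2) / x^(Suc j) = x^(j^2 + j)" for j
    using assms by (simp only: power_add) simp
  moreover have "x^(j^2) * x^j = x^(j^2 + j)" for j
    by (simp add: power_add)
  ultimately show ?thesis
    by (simp add: theta2_reduced_def)
qed

lemma theta2_reduced_product:
  fixes x :: complex
  assumes "norm x < 1"
  shows "theta2_reduced x * qpoch_inf (x^2) = 2 * qpoch_inf (x^4) ^ 2"
proof (cases "x = 0")
  case False
  define B where "B N = (\<Prod>i<N. 1 + x^(2*i+2))" for N
  define C where "C N = (\<Prod>i<N. 1 + x^(2*i))" for N
  define BC where "BC = (\<lambda>N. B N * C N)"
  have "(1 + x^(2*i+1) * x) * (1 + x^(2*i+1) / x) = (1 + x^(2*i+2)) * (1 + x^(2*i))" for i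
    using False by simp
  then have "BC \<longlonglongrightarrow> inverse (qpoch_inf (x^2)) * theta2_reduced x"
    using jacobi_triple_product[OF assms False False, unfolded theta2_reduced_eq_jacobi_series[OF False]]
    by (simp add: BC_def B_def C_def prod.distrib)
  moreover have "(\<lambda>N. x^(2*N)) \<longlonglongrightarrow> 0"
    using LIMSEQ_power_zero[OF norm_power2_less_one[OF assms]] by (simp add: power_mult)
  ultimately have lim: "(\<lambda>N. BC N * (1 + x^(2*N)) * qpoch (x^2) N^2)
      \<longlonglongrightarrow> inverse (qpoch_inf (x^2)) * theta2_reduced x * (1 + 0) * qpoch_inf (x^2) ^ 2"
    by (intro tendsto_mult tendsto_add tendsto_const tendsto_power qpoch_tendsto_qpoch_inf
        norm_power2_less_one assms)
  have finite: "BC N * (1 + x^(2*N)) * qpoch (x^2) N^2 = 2 * qpoch (x^4) N^2" for N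
  proof -
    have "BC N * (1 + x^(2*N)) * qpoch (x^2) N^2 = 2 * (B N * qpoch (x^2) N)^2"
      using prod_one_plus_even_powers_shift[of x N]
      by (simp add: BC_def B_def C_def power2_eq_square mult_ac)
    then show ?thesis
      unfolding B_def prod_one_plus_even_powers .
  qed
  have "(\<lambda>N. 2 * qpoch (x^4) N^2) \<longlonglongrightarrow> 2 * qpoch_inf (x^4) ^ 2"
    using norm_power4_less_one[OF assms] by (intro tendsto_intros qpoch_tendsto_qpoch_inf)
  then have "inverse (qpoch_inf (x^2)) * theta2_reduced x * (1 + 0) * qpoch_inf (x^2) ^ 2
      = 2 * qpoch_inf (x^4) ^ 2"
    using lim unfolding finite by (rule LIMSEQ_unique[rotated])
  then show ?thesis
    using qpoch_inf_nonzero[OF norm_power2_less_one[OF assms]] by (simp add: field_simps power2_eq_square)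
qed (simp add: qpoch_inf_def)

definition theta3_term :: "complex \<Rightarrow> int \<Rightarrow> complex" where
  "theta3_term x n = x ^ nat (n^2)"

definition theta2_term :: "complex \<Rightarrow> int \<Rightarrow> complex" where
  "theta2_term x n = x ^ nat (n^2 + n)"

lemma has_sum_int_of_nat_series:
  fixes f :: "int \<Rightarrow> complex"
  assumes "summable (\<lambda>j. norm (f (int j)))" "summable (\<lambda>j. norm (f (- int (Suc j))))"
  shows "(f has_sum ((\<Sum>j. f (int j)) + (\<Sum>j. f (- int (Suc j))))) UNIV"
proof -
  have "((f \<circ> int) has_sum (\<Sum>j. f (int j))) UNIV"
    "((f \<circ> (\<lambda>j. - int (Suc j))) has_sum (\<Sum>j. f (- int (Suc j)))) UNIV"
    using assms by (auto simp: o_def intro!: norm_summable_imp_has_sum summable_sums summable_norm_cancel)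
  then have nonneg: "(f has_sum (\<Sum>j. f (int j))) (range int)"
    and neg: "(f has_sum (\<Sum>j. f (- int (Suc j)))) (range (\<lambda>j. - int (Suc j)))"
    by (simp_all add: has_sum_reindex inj_on_def)
  have "n \<in> range int \<union> range (\<lambda>j. - int (Suc j))" for n :: int
  proof (cases "n \<ge> 0")
    case True
    then show ?thesis
      by (auto intro: image_eqI[of _ _ "nat n"])
  next
    case False
    then have "n = - int (Suc (nat (- n - 1)))"
      by simp
    then show ?thesis
      by blast
  qed
  then have "range int \<union> range (\<lambda>j. - int (Suc j)) = UNIV"
    by blast
  moreover have "range int \<inter> range (\<lambda>j. - int (Suc j)) = {}"
    by auto
  ultimately show ?thesis
    using has_sum_Un_disjoint[OF nonneg neg] by simp
qed

lemma summable_norm_power_sq: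
  fixes x :: complex
  assumes "norm x < 1"
  shows "summable (\<lambda>j. norm (x^(j^2)))" "summable (\<lambda>j. norm (x^((Suc j)^2)))"
    "summable (\<lambda>j. norm (x^(j^2 + j)))"
proof -
  show "summable (\<lambda>j. norm (x^(j^2)))"
    using summable_power_sq_mult_power[of "norm x" 1] assms by (simp add: norm_power)
  then show "summable (\<lambda>j. norm (x^((Suc j)^2)))"
    by (subst summable_Suc_iff)
  show "summable (\<lambda>j. norm (x^(j^2 + j)))"
    using summable_power_sq_mult_power[of "norm x" "norm x"] assms
    by (simp add: norm_power power_add norm_mult)
qed

lemma theta3_term_has_sum:
  fixes x :: complex
  assumes "norm x < 1"
  shows "(theta3_term x has_sum theta3 x) UNIV"
proof -
  have "theta3_term x (int j) = x^(j^2)" for j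
    by (simp add: theta3_term_def nat_power_eq)
  moreover have "theta3_term x (- int (Suc j)) = x^((Suc j)^2)" for j
  proof -
    have "(- int (Suc j))^2 = int ((Suc j)^2)"
      by (simp only: power2_minus of_nat_power)
    then show ?thesis
      unfolding theta3_term_def by (simp only: nat_int)
  qed
  ultimately show ?thesis
    using has_sum_int_of_nat_series[of "theta3_term x"] summable_norm_power_sq[OF assms]
    by (simp add: theta3_def)
qed

lemma theta2_term_has_sum:
  fixes x :: complex
  assumes "norm x < 1"
  shows "(theta2_term x has_sum theta2_reduced x) UNIV"
proof -
  have "theta2_term x (int j) = x^(j^2 + j)" for j
  proof -
    have "nat ((int j)^2 + int j) = j^2 + j"
      by (simp add: nat_add_distrib nat_power_eq)
    then show ?thesis
      by (simp add: theta2_term_def)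
  qed
  moreover have "theta2_term x (- int (Suc j)) = x^(j^2 + j)" for j
  proof -
    have "(- int (Suc j))^2 + (- int (Suc j)) = int (j^2 + j)"
      by (simp add: power2_eq_square algebra_simps)
    then show ?thesis
      unfolding theta2_term_def by (simp only: nat_int)
  qed
  ultimately show ?thesis
    using has_sum_int_of_nat_series[of "theta2_term x"] summable_norm_power_sq[OF assms]
    by (simp add: theta2_reduced_def)
qed

lemma has_sum_mult_pairs:
  fixes f g :: "'a \<Rightarrow> complex"
  assumes f: "(f has_sum a) A" and g: "(g has_sum b) B"
  shows "((\<lambda>(m, n). f m * g n) has_sum (a * b)) (A \<times> B)"
proof -
  have f_abs: "(\<lambda>x. norm (f x)) summable_on A" and g_abs: "(\<lambda>x. norm (g x)) summable_on B"
    using f g summable_on_iff_abs_summable_on_complex by (auto simp: summable_on_def)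
  have "(\<lambda>p. norm ((\<lambda>(m, n). f m * g n) p)) summable_on (A \<times> B)"
  proof (rule Infinite_Sum.abs_summable_on_Sigma_iff[THEN iffD2], intro conjI ballI)
    show "(\<lambda>n. norm (case (m, n) of (m, n) \<Rightarrow> f m * g n)) summable_on B" for m
      using summable_on_cmult_right[OF g_abs, of "norm (f m)"] by (simp add: norm_mult)
    have "(\<lambda>m. norm (f m) * (\<Sum>\<^sub>\<infinity>n\<in>B. norm (g n))) summable_on A"
      by (rule summable_on_cmult_left[OF f_abs])
    then show "(\<lambda>m. norm (\<Sum>\<^sub>\<infinity>n\<in>B. norm (case (m, n) of (m, n) \<Rightarrow> f m * g n))) summable_on A"
      by (simp add: norm_mult infsum_cmult_right' infsum_nonneg)
  qed
  then have "(\<lambda>(m, n). f m * g n) summable_on (A \<times> B)"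
    using summable_on_iff_abs_summable_on_complex by blast
  then show ?thesis
    using has_sum_cmult_right[OF g] has_sum_cmult_left[OF f] by (intro has_sum_SigmaI) auto
qed

lemma power_nat_mult_power_nat:
  fixes x :: "'a::monoid_mult"
  assumes "0 \<le> e1" "0 \<le> e2" "0 \<le> f1" "0 \<le> f2" "0 \<le> c" "e1 + e2 = c + 2*f1 + 2*f2"
  shows "x^(nat e1) * x^(nat e2) = x^(nat c) * ((x^2)^(nat f1) * (x^2)^(nat f2))"
proof -
  have "nat e1 + nat e2 = nat c + 2 * nat f1 + 2 * nat f2"
    using assms by arith
  then have "x^(nat e1 + nat e2) = x^(nat c + 2 * nat f1 + 2 * nat f2)"
    by simp
  then show ?thesis
    by (simp add: power_add power_mult mult.assoc)
qed

lemma square_plus_self_nonneg: "0 \<le> (a::int)^2 + a"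
proof (cases "a \<ge> 0")
  case False
  then have "0 \<le> (-a) * (-a - 1)"
    by (intro mult_nonneg_nonneg) auto
  then show ?thesis
    by (simp add: power2_eq_square algebra_simps)
qed simp

text \<open>The pairs \<open>(m, n)\<close> with \<open>m + n + c\<close> even are exactly the \<open>(a + b + c, a - b)\<close>.\<close>
lemma has_sum_pairs_parity_class:
  fixes F :: "int \<times> int \<Rightarrow> complex" and c :: int
  assumes "((\<lambda>(a, b). F (a + b + c, a - b)) has_sum r) UNIV"
  shows "(F has_sum r) {p. even (fst p + snd p + c)}"
proof -
  define T where "T = {p :: int \<times> int. even (fst p + snd p + c)}"
  define i where "i = (\<lambda>(m, n). ((m + n - c) div 2, (m - n - c) div 2 :: int))"
  define j where "j = (\<lambda>(a, b). (a + b + c, a - b :: int))"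
  have "j (i p) = p" if "p \<in> T" for p
  proof -
    obtain m n where p: "p = (m, n)" and "even (m + n + c)"
      using \<open>p \<in> T\<close> by (cases p) (auto simp: T_def)
    then have "even (m + n - c)" "even (m - n - c)"
      by presburger+
    then obtain k l where "m + n - c = 2*k" "m - n - c = 2*l"
      by (meson evenE)
    then show ?thesis
      by (simp add: p i_def j_def)
  qed
  moreover have "i (j q) = q" "j q \<in> T" for q
    by (auto simp: i_def j_def T_def split: prod.splits)
  ultimately have "(F has_sum r) T"
    using has_sum_reindex_bij_witness[of UNIV i j T F "\<lambda>(a, b). F (a + b + c, a - b)" r r] assms
    by (auto simp: j_def split: prod.splits)
  then show ?thesis
    by (simp only: T_def)
qed

lemma has_sum_pairs_parity_split:
  fixes F :: "int \<times> int \<Rightarrow> complex"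
  assumes "((\<lambda>(a, b). F (a + b, a - b)) has_sum s) UNIV"
    and "((\<lambda>(a, b). F (a + b + 1, a - b)) has_sum t) UNIV"
  shows "(F has_sum (s + t)) UNIV"
proof -
  from has_sum_pairs_parity_class[of F 0] has_sum_pairs_parity_class[of F 1] assms
  have even: "(F has_sum s) {p. even (fst p + snd p)}" and odd: "(F has_sum t) {p. odd (fst p + snd p)}"
    by simp_all
  have disjoint: "{p. even (fst p + snd p)} \<inter> {p. odd (fst p + snd p)} = {}"
    and union: "{p. even (fst p + snd p)} \<union> {p. odd (fst p + snd p)} = UNIV"
    by auto
  from has_sum_Un_disjoint[OF even odd disjoint] show ?thesis
    unfolding union .
qed

lemma theta3_square:
  fixes x :: complex
  assumes "norm x < 1"
  shows "theta3 x ^ 2 = theta3 (x^2) ^ 2 + x * theta2_reduced (x^2) ^ 2"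
proof -
  note x2 = norm_power2_less_one[OF assms]
  define F where "F = (\<lambda>(m, n). theta3_term x m * theta3_term x n)"
  have "(F has_sum (theta3 x * theta3 x)) UNIV"
    using has_sum_mult_pairs[OF theta3_term_has_sum[OF assms] theta3_term_has_sum[OF assms]]
    by (simp add: F_def)
  moreover have "(F has_sum (theta3 (x^2) * theta3 (x^2) + x * (theta2_reduced (x^2) * theta2_reduced (x^2)))) UNIV"
  proof (rule has_sum_pairs_parity_split)
    have "F (a + b, a - b) = theta3_term (x^2) a * theta3_term (x^2) b" for a b
    proof -
      have "x^nat ((a + b)^2) * x^nat ((a - b)^2) = x^nat 0 * ((x^2)^nat (a^2) * (x^2)^nat (b^2))"
        by (rule power_nat_mult_power_nat[OF zero_le_power2 zero_le_power2 zero_le_power2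
            zero_le_power2 order_refl]) (simp add: power2_eq_square algebra_simps)
      then show ?thesis
        by (simp add: F_def theta3_term_def)
    qed
    then show "((\<lambda>(a, b). F (a + b, a - b)) has_sum (theta3 (x^2) * theta3 (x^2))) UNIV"
      using has_sum_mult_pairs[OF theta3_term_has_sum[OF x2] theta3_term_has_sum[OF x2]] by simp
    have "F (a + b + 1, a - b) = x * (theta2_term (x^2) a * theta2_term (x^2) b)" for a b
    proof -
      have "x^nat ((a + b + 1)^2) * x^nat ((a - b)^2)
          = x^nat 1 * ((x^2)^nat (a^2 + a) * (x^2)^nat (b^2 + b))"
        by (rule power_nat_mult_power_nat[OF zero_le_power2 zero_le_power2 square_plus_self_nonneg
            square_plus_self_nonneg]) (simp_all add: power2_eq_square algebra_simps)
      then show ?thesis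
        by (simp add: F_def theta3_term_def theta2_term_def)
    qed
    then show "((\<lambda>(a, b). F (a + b + 1, a - b)) has_sum
        (x * (theta2_reduced (x^2) * theta2_reduced (x^2)))) UNIV"
      using has_sum_cmult_right[OF has_sum_mult_pairs[OF theta2_term_has_sum[OF x2] theta2_term_has_sum[OF x2]]]
      by (simp add: case_prod_unfold)
  qed
  ultimately show ?thesis
    using has_sum_unique by (fastforce simp: power2_eq_square)
qed

lemma theta2_reduced_square:
  fixes x :: complex
  assumes "norm x < 1"
  shows "theta2_reduced x ^ 2 = 2 * theta3 (x^2) * theta2_reduced (x^2)"
proof -
  note x2 = norm_power2_less_one[OF assms]
  define F where "F = (\<lambda>(m, n). theta2_term x m * theta2_term x n)"
  have "(F has_sum (theta2_reduced x * theta2_reduced x)) UNIV"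
    using has_sum_mult_pairs[OF theta2_term_has_sum[OF assms] theta2_term_has_sum[OF assms]]
    by (simp add: F_def)
  moreover have "(F has_sum (theta2_reduced (x^2) * theta3 (x^2) + theta3 (x^2) * theta2_reduced (x^2))) UNIV"
  proof (rule has_sum_pairs_parity_split)
    have "F (a + b, a - b) = theta2_term (x^2) a * theta3_term (x^2) b" for a b
    proof -
      have "x^nat ((a + b)^2 + (a + b)) * x^nat ((a - b)^2 + (a - b))
          = x^nat 0 * ((x^2)^nat (a^2 + a) * (x^2)^nat (b^2))"
        by (rule power_nat_mult_power_nat[OF square_plus_self_nonneg square_plus_self_nonneg
            square_plus_self_nonneg zero_le_power2 order_refl]) (simp add: power2_eq_square algebra_simps)
      then show ?thesis
        by (simp add: F_def theta3_term_def theta2_term_def)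
    qed
    then show "((\<lambda>(a, b). F (a + b, a - b)) has_sum (theta2_reduced (x^2) * theta3 (x^2))) UNIV"
      using has_sum_mult_pairs[OF theta2_term_has_sum[OF x2] theta3_term_has_sum[OF x2]] by simp
    have "F (a + b + 1, a - b) = theta3_term (x^2) (a + 1) * theta2_term (x^2) b" for a b
    proof -
      have "x^nat ((a + b + 1)^2 + (a + b + 1)) * x^nat ((a - b)^2 + (a - b))
          = x^nat 0 * ((x^2)^nat ((a + 1)^2) * (x^2)^nat (b^2 + b))"
        by (rule power_nat_mult_power_nat[OF square_plus_self_nonneg square_plus_self_nonneg
            zero_le_power2 square_plus_self_nonneg order_refl]) (simp add: power2_eq_square algebra_simps)
      then show ?thesis
        by (simp add: F_def theta3_term_def theta2_term_def)
    qed
    moreover have shifted: "((\<lambda>a. theta3_term (x^2) (a + 1)) has_sum theta3 (x^2)) UNIV"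
      using has_sum_reindex_bij_witness[of UNIV "\<lambda>n. n - 1" "\<lambda>n. n + 1" UNIV
          "theta3_term (x^2)" "\<lambda>a. theta3_term (x^2) (a + 1)"] theta3_term_has_sum[OF x2]
      by simp
    ultimately show "((\<lambda>(a, b). F (a + b + 1, a - b)) has_sum (theta3 (x^2) * theta2_reduced (x^2))) UNIV"
      using has_sum_mult_pairs[OF shifted theta2_term_has_sum[OF x2]] by simp
  qed
  ultimately show ?thesis
    using has_sum_unique by (fastforce simp: power2_eq_square)
qed

lemma norm_suminf_power_le:
  fixes y :: complex and e :: "nat \<Rightarrow> nat"
  assumes y: "norm y < 1" and e: "\<And>j. e j \<ge> Suc j"
  shows "norm (\<Sum>j. y^(e j)) \<le> norm y / (1 - norm y)"
proof -
  have geometric: "summable (\<lambda>j. norm y * norm y ^ j)"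
    using y by (intro summable_mult summable_geometric) simp
  have le: "norm (y^(e j)) \<le> norm y * norm y ^ j" for j
    using power_decreasing[OF e[of j], of "norm y"] y by (simp add: norm_power)
  have summable: "summable (\<lambda>j. norm (y^(e j)))"
    by (rule summable_comparison_test[OF _ geometric]) (use le in auto)
  have "norm (\<Sum>j. y^(e j)) \<le> (\<Sum>j. norm (y^(e j)))"
    by (rule summable_norm[OF summable])
  also have "\<dots> \<le> (\<Sum>j. norm y * norm y ^ j)"
    by (rule suminf_le[OF le summable geometric])
  also have "\<dots> = norm y / (1 - norm y)"
    using y by (simp add: suminf_mult suminf_geometric summable_geometric divide_simps)
  finally show ?thesis .
qed

lemma isCont_suminf_power_0:
  fixes e :: "nat \<Rightarrow> nat"
  assumes "\<And>j. e j \<ge> Suc j"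
  shows "isCont (\<lambda>y::complex. \<Sum>j. y^(e j)) 0"
proof -
  have "((\<lambda>y::complex. \<Sum>j. y^(e j)) \<longlongrightarrow> 0) (at 0)"
  proof (rule Lim_null_comparison)
    show "\<forall>\<^sub>F y in at 0. norm (\<Sum>j. (y::complex)^(e j)) \<le> norm y / (1 - norm y)"
      using eventually_at_ball[OF zero_less_one, of "0::complex" UNIV]
      by eventually_elim (simp add: norm_suminf_power_le[OF _ assms])
    have "((\<lambda>y::complex. norm y / (1 - norm y)) \<longlongrightarrow> norm (0::complex) / (1 - norm (0::complex))) (at 0)"
      by (intro tendsto_intros) auto
    then show "((\<lambda>y::complex. norm y / (1 - norm y)) \<longlongrightarrow> 0) (at 0)"
      by simp
  qed
  moreover have "(\<lambda>j. (0::complex)^(e j)) = (\<lambda>j. 0)"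
    using assms by (metis not_less_eq_eq zero_le power_0_left)
  ultimately show ?thesis
    by (simp add: isCont_def)
qed

lemma theta3_eq_1_plus_tail:
  fixes y :: complex
  assumes "norm y < 1"
  shows "theta3 y = 1 + 2 * (\<Sum>j. y^((Suc j)^2))"
proof -
  have "summable (\<lambda>j. y^(j^2))"
    using summable_norm_power_sq(1)[OF assms] by (rule summable_norm_cancel)
  then show ?thesis
    using suminf_split_head by (fastforce simp: theta3_def)
qed

lemma theta2_reduced_eq_2_plus_tail:
  fixes y :: complex
  assumes "norm y < 1"
  shows "theta2_reduced y = 2 + 2 * (\<Sum>j. y^((Suc j)^2 + Suc j))"
proof -
  have "summable (\<lambda>j. y^(j^2 + j))"
    using summable_norm_power_sq(3)[OF assms] by (rule summable_norm_cancel)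
  then have "(\<Sum>j. y^(j^2 + j)) = 1 + (\<Sum>j. y^((Suc j)^2 + Suc j))"
    using suminf_split_head by fastforce
  then show ?thesis
    unfolding theta2_reduced_def by simp
qed

lemma isCont_theta3_0: "isCont theta3 0"
proof -
  have "\<forall>\<^sub>F y in nhds 0. theta3 y = 1 + 2 * (\<Sum>j. y^((Suc j)^2))"
    using eventually_nhds_ball[OF zero_less_one, of "0::complex"]
    by eventually_elim (simp add: theta3_eq_1_plus_tail)
  moreover have "isCont (\<lambda>y::complex. 1 + 2 * (\<Sum>j. y^((Suc j)^2))) 0"
    by (intro continuous_intros isCont_suminf_power_0) (simp add: power2_eq_square)
  ultimately show ?thesis
    by (simp add: isCont_cong)
qed

lemma isCont_theta2_reduced_0: "isCont theta2_reduced 0"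
proof -
  have "\<forall>\<^sub>F y in nhds 0. theta2_reduced y = 2 + 2 * (\<Sum>j. y^((Suc j)^2 + Suc j))"
    using eventually_nhds_ball[OF zero_less_one, of "0::complex"]
    by eventually_elim (simp add: theta2_reduced_eq_2_plus_tail)
  moreover have "isCont (\<lambda>y::complex. 2 + 2 * (\<Sum>j. y^((Suc j)^2 + Suc j))) 0"
    by (intro continuous_intros isCont_suminf_power_0) (simp add: power2_eq_square)
  ultimately show ?thesis
    by (simp add: isCont_cong)
qed

section \<open>Landen's transformation\<close>

lemma eventually_nhds_compose_isCont:
  assumes "isCont g x" "\<forall>\<^sub>F y in nhds (g x). P y"
  shows "\<forall>\<^sub>F y in nhds x. P (g y)"
  using assms(1) by (intro eventually_compose_filterlim[OF assms(2)])
    (simp add: isCont_def tendsto_at_iff_tendsto_nhds)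

lemma eventually_nonzero_theta3:
  "\<forall>\<^sub>F y in nhds 0. theta3 y \<noteq> 0 \<and> theta3 (y^2) \<noteq> 0"
proof -
  have "(theta3 \<longlongrightarrow> theta3 0) (nhds 0)"
    using isCont_theta3_0 unfolding isCont_def tendsto_at_iff_tendsto_nhds .
  then have nonzero: "\<forall>\<^sub>F y in nhds 0. theta3 y \<noteq> 0"
    by (rule tendsto_imp_eventually_ne) simp
  have "isCont (\<lambda>y::complex. y^2) 0"
    by (intro continuous_intros)
  from eventually_nhds_compose_isCont[OF this, of "\<lambda>z. theta3 z \<noteq> 0"] nonzero
  have "\<forall>\<^sub>F y in nhds 0. theta3 (y^2) \<noteq> 0"
    by simp
  with nonzero show ?thesis
    by eventually_elim simp
qed

text \<open>\<open>\<lambda>(q) / 16\<close> for the modular lambda function \<open>\<lambda> = \<theta>\<^sub>2^4 / \<theta>\<^sub>3^4\<close> of the nome \<open>q\<close>.\<close>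
definition modular_lambda16 :: "complex \<Rightarrow> complex" where
  "modular_lambda16 y = y * theta2_reduced y ^ 4 / (16 * theta3 y ^ 4)"

definition clf_t_nome :: "complex \<Rightarrow> complex" where
  "clf_t_nome y = y * theta2_reduced (y^2) ^ 2 / (8 * theta3 y ^ 2)"

lemma modular_lambda16_0 [simp]: "modular_lambda16 0 = 0"
  by (simp add: modular_lambda16_def)

lemma clf_t_nome_0 [simp]: "clf_t_nome 0 = 0"
  by (simp add: clf_t_nome_def)

lemma isCont_modular_lambda16_0: "isCont modular_lambda16 0"
  unfolding modular_lambda16_def by (intro continuous_intros isCont_theta3_0 isCont_theta2_reduced_0) simp

lemma isCont_clf_t_nome_0: "isCont clf_t_nome 0"
proof -
  have "isCont (\<lambda>y::complex. theta2_reduced (y^2)) 0"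
    by (rule isCont_o2[where f = "\<lambda>y. y^2"]) (simp_all add: isCont_theta2_reduced_0)
  then show ?thesis
    unfolding clf_t_nome_def by (intro continuous_intros isCont_theta3_0) simp_all
qed

lemma landen_algebra:
  fixes y A B Th Tau t :: complex
  assumes theta: "Th^2 = A^2 + y * B^2" and tau: "Tau^2 = 2 * A * B"
    and "A \<noteq> 0" "Th \<noteq> 0" and t: "t = y * B^2 / (8 * Th^2)"
  shows "1 - 8*t = A^2 / Th^2"
    and "2*t - 16*t^2 = y * Tau^4 / (16 * Th^4)"
    and "4 * t^2 * (inverse (1 - 8*t))^2 = y^2 * B^4 / (16 * A^4)"
proof -
  have "1 - 8*t = (Th^2 - y * B^2) / Th^2"
    unfolding t using \<open>Th \<noteq> 0\<close> by (simp add: field_simps)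
  then show one_minus: "1 - 8*t = A^2 / Th^2"
    by (simp add: theta)
  have "2*t - 16*t^2 = 2 * t * (1 - 8*t)"
    by (simp add: algebra_simps power2_eq_square)
  also have "\<dots> = 2 * t * (A^2 / Th^2)"
    by (simp only: one_minus)
  also have "\<dots> = y * B^2 * A^2 / (4 * Th^4)"
    unfolding t using \<open>Th \<noteq> 0\<close> by (simp add: field_simps power2_eq_square eval_nat_numeral)
  also have "\<dots> = y * Tau^4 / (16 * Th^4)"
  proof -
    have "Tau^4 = (Tau^2)^2"
      by (simp flip: power_mult)
    also have "\<dots> = 4 * A^2 * B^2"
      unfolding tau by (simp add: power2_eq_square algebra_simps)
    finally show ?thesis
      using \<open>Th \<noteq> 0\<close> by (simp add: field_simps)
  qed
  finally show "2*t - 16*t^2 = y * Tau^4 / (16 * Th^4)" .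
  have "4 * t^2 * (inverse (1 - 8*t))^2 = 4 * t^2 * (inverse (A^2 / Th^2))^2"
    by (simp only: one_minus)
  also have "\<dots> = y^2 * B^4 / (16 * A^4)"
    unfolding t using \<open>Th \<noteq> 0\<close> \<open>A \<noteq> 0\<close> by (simp add: field_simps power2_eq_square eval_nat_numeral)
  finally show "4 * t^2 * (inverse (1 - 8*t))^2 = y^2 * B^4 / (16 * A^4)" .
qed

lemma eventually_clf_series_sums:
  "\<forall>\<^sub>F x in nhds 0. (\<lambda>n. complex_of_real (clf n) * x^n) sums eval_fps clf_fps x"
proof -
  obtain r where "0 < ereal r" "ereal r < fps_conv_radius clf_fps"
    using ereal_dense2[OF clf_fps_conv_radius_pos] by blast
  then have r: "r > 0" "ereal r < fps_conv_radius clf_fps"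
    by simp_all
  have "(\<lambda>n. fps_nth clf_fps n * x^n) sums eval_fps clf_fps x" if "x \<in> ball 0 r" for x
  proof (rule sums_eval_fps)
    have "ereal (norm x) < ereal r"
      using that by simp
    then show "ereal (norm x) < fps_conv_radius clf_fps"
      using r(2) by (rule less_trans)
  qed
  then show ?thesis
    using eventually_nhds_ball[OF r(1), of 0] by (auto simp: clf_fps_def elim!: eventually_mono)
qed

lemma eventually_landen_descent:
  "\<forall>\<^sub>F y in nhds 0.
     (\<lambda>n. complex_of_real (clf n) * clf_t_nome y ^ n) sums central_binom_sq (modular_lambda16 y) \<and>
     central_binom_sq (modular_lambda16 (y^2)) / theta3 (y^2) ^ 2
       = central_binom_sq (modular_lambda16 y) / theta3 y ^ 2"
proof -
  have "\<forall>\<^sub>F y in nhds 0. (\<lambda>n. complex_of_real (clf n) * clf_t_nome y ^ n) sums eval_fps clf_fps (clf_t_nome y)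
      \<and> eval_fps clf_fps (clf_t_nome y) = central_binom_sq (2 * clf_t_nome y - 16 * clf_t_nome y ^ 2)
      \<and> eval_fps clf_fps (clf_t_nome y) * (1 - 8 * clf_t_nome y)
        = central_binom_sq (4 * clf_t_nome y ^ 2 * (inverse (1 - 8 * clf_t_nome y))^2)"
    using eventually_conj[OF eventually_clf_series_sums eventually_clf_series_eq_central_binom_sq]
    by (intro eventually_nhds_compose_isCont[OF isCont_clf_t_nome_0]) simp
  with eventually_nhds_ball[OF zero_less_one, of 0] eventually_nonzero_theta3
  show ?thesis
  proof eventually_elim
    case (elim y)
    then have y: "norm y < 1"
      by simp
    then have nonzero: "theta3 (y^2) \<noteq> 0" "theta3 y \<noteq> 0"
      using elim by simp_all
    note landen = landen_algebra[OF theta3_square[OF y] theta2_reduced_square[OF y] nonzero clf_t_nome_def]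
    have "eval_fps clf_fps (clf_t_nome y) = central_binom_sq (modular_lambda16 y)"
      using elim unfolding landen(2) modular_lambda16_def by blast
    moreover have "eval_fps clf_fps (clf_t_nome y) * (theta3 (y^2)^2 / theta3 y^2)
        = central_binom_sq (modular_lambda16 (y^2))"
      using elim unfolding landen(3) modular_lambda16_def unfolding landen(1) by blast
    ultimately show ?case
      using elim nonzero by (auto simp: field_simps)
  qed
qed

lemma square_invariant_eq_value_at_0:
  fixes R :: "complex \<Rightarrow> 'a::t2_space"
  assumes "isCont R 0" "r \<le> 1" "\<And>y. norm y < r \<Longrightarrow> R (y^2) = R y" "norm y < r"
  shows "R y = R 0"
proof -
  have small: "norm (y^(2^k)) < r" for k
  proof -
    have "norm (y^(2^k)) = norm y ^ (2^k)"
      by (simp add: norm_power)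
    also have "\<dots> \<le> norm y ^ 1"
      using assms(2,4) by (intro power_decreasing) auto
    finally show ?thesis
      using assms(4) by simp
  qed
  have invariant: "R (y^(2^k)) = R y" for k
  proof (induction k)
    case (Suc k)
    have "(y^(2^k))^2 = y^(2^Suc k)"
      by (simp flip: power_mult add: mult.commute)
    with Suc assms(3)[OF small[of k]] show ?case
      by simp
  qed simp
  have "(\<lambda>k. y^(2^k)) \<longlonglongrightarrow> 0"
  proof (rule Lim_null_comparison)
    show "\<forall>\<^sub>F k in sequentially. norm (y^(2^k)) \<le> norm y ^ k"
      using assms(2,4) by (intro always_eventually allI)
        (simp add: norm_power power_decreasing less_exp less_imp_le)
    show "(\<lambda>k. norm y ^ k) \<longlonglongrightarrow> 0"
      using assms(2,4) by (intro LIMSEQ_power_zero) simp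
  qed
  then have "(\<lambda>k. R (y^(2^k))) \<longlonglongrightarrow> R 0"
    by (rule isCont_tendsto_compose[OF assms(1)])
  then show ?thesis
    by (simp add: invariant LIMSEQ_const_iff)
qed

lemma eventually_clf_series_clf_t_nome:
  "\<forall>\<^sub>F y in nhds 0. (\<lambda>n. complex_of_real (clf n) * clf_t_nome y ^ n) sums theta3 y ^ 2"
proof -
  define R where "R y = central_binom_sq (modular_lambda16 y) / theta3 y ^ 2" for y
  obtain d where "d > 0" and descent: "\<And>y. norm y < d \<Longrightarrow>
      (\<lambda>n. complex_of_real (clf n) * clf_t_nome y ^ n) sums central_binom_sq (modular_lambda16 y) \<and>
      R (y^2) = R y"
    using eventually_landen_descent unfolding R_def eventually_nhds_metric dist_norm by auto
  have "isCont (\<lambda>y. central_binom_sq (modular_lambda16 y)) 0"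
    by (rule isCont_o2[OF isCont_modular_lambda16_0]) (simp add: isCont_central_binom_sq_0)
  then have "isCont R 0"
    unfolding R_def by (intro continuous_intros isCont_theta3_0) simp_all
  then have "R y = 1" if "norm y < min d 1" for y
    using square_invariant_eq_value_at_0[of R "min d 1" y] descent that by (simp add: R_def)
  then have jacobi: "central_binom_sq (modular_lambda16 y) = theta3 y ^ 2" if "norm y < min d 1" for y
    using that by (cases "theta3 y = 0") (auto simp: R_def)
  have "\<forall>\<^sub>F y in nhds 0. norm (y::complex) < min d 1"
    using eventually_nhds_ball[of "min d 1" "0::complex"] \<open>d > 0\<close> by (simp add: dist_norm)
  then show ?thesis
  proof eventually_elim
    case (elim y)
    then show ?case
      using descent[of y] jacobi[OF elim] by simp
  qed
qed

section \<open>Eta quotients\<close>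

lemma norm_nome: "norm (nome \<tau>) = exp (- 2 * pi * Im \<tau>)"
  by (simp add: nome_def norm_exp_eq_Re)

lemma norm_nome_less_1: "Im \<tau> > 0 \<Longrightarrow> norm (nome \<tau>) < 1"
  by (simp add: norm_nome)

lemma norm_nome_less:
  assumes "r > 0" "Im \<tau> > - ln r / (2 * pi)"
  shows "norm (nome \<tau>) < r"
proof -
  have "- ln r < 2 * pi * Im \<tau>"
    using assms(2) pi_gt_zero by (simp add: field_simps)
  then have "exp (- 2 * pi * Im \<tau>) < exp (ln r)"
    by simp
  then show ?thesis
    using assms(1) by (simp add: norm_nome)
qed

lemma dedekind_eta_of_nat_mult:
  "dedekind_eta (of_nat k * \<tau>) = exp (2 * pi * \<i> * \<tau> / 24) ^ k * qpoch_inf (nome \<tau> ^ k)"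
proof -
  have "2 * pi * \<i> * (of_nat k * \<tau>) / 24 = of_nat k * (2 * pi * \<i> * \<tau> / 24)"
    by simp
  then have root: "exp (2 * pi * \<i> * (of_nat k * \<tau>) / 24) = exp (2 * pi * \<i> * \<tau> / 24) ^ k"
    by (simp only: exp_of_nat_mult)
  have "2 * pi * \<i> * (of_nat k * \<tau>) = of_nat k * (2 * pi * \<i> * \<tau>)"
    by simp
  then have "nome (of_nat k * \<tau>) = nome \<tau> ^ k"
    unfolding nome_def by (simp only: exp_of_nat_mult)
  then show ?thesis
    unfolding dedekind_eta_def root qpoch_inf_def by simp
qed

lemma exp_nome_root_pow_24: "exp (2 * pi * \<i> * \<tau> / 24) ^ 24 = nome \<tau>"
proof -
  have "exp (2 * pi * \<i> * \<tau> / 24) ^ 24 = exp (of_nat 24 * (2 * pi * \<i> * \<tau> / 24))"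
    by (simp only: exp_of_nat_mult)
  also have "of_nat 24 * (2 * pi * \<i> * \<tau> / 24) = 2 * pi * \<i> * \<tau>"
    by simp
  finally show ?thesis
    by (simp add: nome_def)
qed

lemma dedekind_eta_multiples:
  "dedekind_eta \<tau> = exp (2 * pi * \<i> * \<tau> / 24) * qpoch_inf (nome \<tau>)"
  "dedekind_eta (2 * \<tau>) = exp (2 * pi * \<i> * \<tau> / 24) ^ 2 * qpoch_inf (nome \<tau> ^ 2)"
  "dedekind_eta (4 * \<tau>) = exp (2 * pi * \<i> * \<tau> / 24) ^ 4 * qpoch_inf (nome \<tau> ^ 4)"
  "dedekind_eta (8 * \<tau>) = exp (2 * pi * \<i> * \<tau> / 24) ^ 8 * qpoch_inf (nome \<tau> ^ 8)"
  using dedekind_eta_of_nat_mult[of 1 \<tau>] dedekind_eta_of_nat_mult[of 2 \<tau>]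
    dedekind_eta_of_nat_mult[of 4 \<tau>] dedekind_eta_of_nat_mult[of 8 \<tau>]
  by simp_all

lemma eta_quotients_eq_theta:
  assumes "norm (nome \<tau>) < 1"
  shows "clf_f \<tau> = theta3 (nome \<tau>) ^ 2" and "clf_t \<tau> = clf_t_nome (nome \<tau>)"
proof -
  define q where "q = nome \<tau>"
  define e where "e = exp (2 * pi * \<i> * \<tau> / 24)"
  define E1 E2 E4 E8 where "E1 = qpoch_inf q" "E2 = qpoch_inf (q^2)" "E4 = qpoch_inf (q^4)"
    "E8 = qpoch_inf (q^8)"
  have q: "norm q < 1"
    using assms by (simp add: q_def)
  have nonzero: "e \<noteq> 0" "E1 \<noteq> 0" "E2 \<noteq> 0" "E4 \<noteq> 0" "E8 \<noteq> 0"
    using qpoch_inf_nonzero[OF q] qpoch_inf_nonzero[OF norm_power_Suc_less_one[OF q, of 1]]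
      qpoch_inf_nonzero[OF norm_power_Suc_less_one[OF q, of 3]]
      qpoch_inf_nonzero[OF norm_power_Suc_less_one[OF q, of 7]]
    by (simp_all add: e_def E1_E2_E4_E8_def eval_nat_numeral)
  have eta: "dedekind_eta \<tau> = e * E1" "dedekind_eta (2 * \<tau>) = e^2 * E2"
    "dedekind_eta (4 * \<tau>) = e^4 * E4" "dedekind_eta (8 * \<tau>) = e^8 * E8"
    using dedekind_eta_multiples[of \<tau>] by (simp_all add: e_def q_def E1_E2_E4_E8_def)
  have "theta3 q * E1^2 * E4^2 = E2^5"
    using theta3_product[OF q] by (simp add: E1_E2_E4_E8_def)
  then have theta3_eq: "theta3 q = E2^5 / (E1^2 * E4^2)"
    using nonzero by (simp add: field_simps)
  have "theta2_reduced (q^2) * E4 = 2 * E8^2"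
    using theta2_reduced_product[OF norm_power2_less_one[OF q]]
    by (simp add: E1_E2_E4_E8_def flip: power_mult)
  then have theta2_eq: "theta2_reduced (q^2) = 2 * E8^2 / E4"
    using nonzero by (simp add: field_simps)
  show "clf_f \<tau> = theta3 (nome \<tau>) ^ 2"
    unfolding clf_f_def eta q_def[symmetric] theta3_eq using nonzero by (simp add: field_simps eval_nat_numeral)
  have "clf_t \<tau> = (1/2) * e^24 * (E1^4 * E4^2 * E8^4) / E2^10"
    unfolding clf_t_def eta using nonzero by (simp add: field_simps eval_nat_numeral)
  also have "\<dots> = clf_t_nome q"
    unfolding e_def exp_nome_root_pow_24 q_def[symmetric] clf_t_nome_def theta3_eq theta2_eq
    using nonzero by (simp add: field_simps eval_nat_numeral)
  finally show "clf_t \<tau> = clf_t_nome (nome \<tau>)"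
    by (simp add: q_def)
qed

theorem theorem8:
  shows "\<exists>y0>0. \<forall>\<tau>::complex. Im \<tau> > y0 \<longrightarrow>
           (\<lambda>n. complex_of_real (clf n) * clf_t \<tau> ^ n) sums clf_f \<tau>"
proof -
  obtain r where "r > 0" and series: "\<And>y. norm y < r \<Longrightarrow>
      (\<lambda>n. complex_of_real (clf n) * clf_t_nome y ^ n) sums theta3 y ^ 2"
    using eventually_clf_series_clf_t_nome unfolding eventually_nhds_metric dist_norm by auto
  define y0 where "y0 = max 1 (- ln r / (2 * pi))"
  show ?thesis
  proof (intro exI[of _ y0] conjI allI impI)
    show "y0 > 0"
      by (simp add: y0_def)
    fix \<tau> :: complex
    assume "Im \<tau> > y0"
    then have "norm (nome \<tau>) < r" "norm (nome \<tau>) < 1"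
      using \<open>r > 0\<close> by (auto intro: norm_nome_less norm_nome_less_1 simp: y0_def)
    then show "(\<lambda>n. complex_of_real (clf n) * clf_t \<tau> ^ n) sums clf_f \<tau>"
      using series by (simp add: eta_quotients_eq_theta)
  qed
qed

end
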